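(* Let $\Sigma$ be a $\sigma$-finite measure space and let $\varphi\in L^\infty(\Sigma^2)$ be a Schur multiplier on $B(L^2(\Sigma))$. Suppose $H$ is a Hilbert space and $\alpha,\beta\in L^\infty(\Sigma,H)$ satisfy $\varphi(s,t)=\langle\alpha(s),\beta(t)\rangle_H$ for almost every $(s,t)\in\Sigma\times\Sigma$. Then $M^\infty_\varphi$ is unital (i.e. $M_\varphi^\infty(I)=I$) if and only if $\langle\alpha(t),\beta(t)\rangle_H=1$ for almost every $t\in\Sigma$.
   Context: $L^\infty(\Sigma,H)$ is the Bochner space of (strongly) measurable essentially bounded $H$-valued functions. $S_f(h)=\int_\Sigma f(\cdot,t)h(t)dt$ for $f\in L^2(\Sigma^2)$; $M_\varphi(S_f)=S_{\varphi f}$ on $S^2(L^2(\Sigma))$. $\varphi$ is a Schur multiplier on $B(L^2(\Sigma))$ if $\|M_\varphi(S)\|_{B(L^2)}\le C\|S\|_{B(L^2)}$ for all $S\in S^2(L^2(\Sigma))$; $M_\varphi^\infty$ denotes its unique $w^*$-continuous extension to $B(L^2(\Sigma))$. *)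

theory Defs
  imports "HOL-Analysis.Analysis"
begin

text \<open>HOL-Analysis only provides real inner product spaces.\<close>

class chilbert = banach +
  fixes scaleC :: "complex \<Rightarrow> 'a \<Rightarrow> 'a"
    and cinner :: "'a \<Rightarrow> 'a \<Rightarrow> complex"
  assumes scaleC_add_right: "scaleC c (x + y) = scaleC c x + scaleC c y"
    and scaleC_add_left: "scaleC (c + d) x = scaleC c x + scaleC d x"
    and scaleC_scaleC: "scaleC c (scaleC d x) = scaleC (c * d) x"
    and scaleC_one: "scaleC 1 x = x"
    and scaleR_scaleC: "scaleR r x = scaleC (complex_of_real r) x"
    and cinner_add_left: "cinner (x + y) z = cinner x z + cinner y z"
    and cinner_scaleC_left: "cinner (scaleC c x) y = c * cinner x y"
    and cinner_commute: "cinner x y = cnj (cinner y x)"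
    and norm_cinner: "norm x = sqrt (Re (cinner x x))"

definition strongly_measurable :: "'a measure \<Rightarrow> ('a \<Rightarrow> 'b::metric_space) \<Rightarrow> bool" where
  "strongly_measurable M f \<longleftrightarrow>
     (\<exists>s :: nat \<Rightarrow> 'a \<Rightarrow> 'b. (\<forall>n. simple_function M (s n)) \<and>
        (AE x in M. (\<lambda>n. s n x) \<longlonglongrightarrow> f x))"

definition Linf_vec :: "'a measure \<Rightarrow> ('a \<Rightarrow> 'b::real_normed_vector) \<Rightarrow> bool" where
  "Linf_vec M f \<longleftrightarrow> strongly_measurable M f \<and> (\<exists>C. AE x in M. norm (f x) \<le> C)"

definition Linf2 :: "'a measure \<Rightarrow> ('a \<Rightarrow> 'a \<Rightarrow> complex) \<Rightarrow> bool" where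
  "Linf2 M \<phi> \<longleftrightarrow> (\<lambda>z. \<phi> (fst z) (snd z)) \<in> borel_measurable (M \<Otimes>\<^sub>M M) \<and>
     (\<exists>C. AE z in M \<Otimes>\<^sub>M M. cmod (\<phi> (fst z) (snd z)) \<le> C)"

text \<open>Elements of L^2 are represented by square-integrable functions; operators by
maps on functions, considered up to a.e. equality of their values on L^2.\<close>

definition L2 :: "'a measure \<Rightarrow> ('a \<Rightarrow> complex) set" where
  "L2 M = {f. f \<in> borel_measurable M \<and> integrable M (\<lambda>x. (cmod (f x))\<^sup>2)}"

definition l2inner :: "'a measure \<Rightarrow> ('a \<Rightarrow> complex) \<Rightarrow> ('a \<Rightarrow> complex) \<Rightarrow> complex" where
  "l2inner M f g = (LINT x|M. f x * cnj (g x))"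

definition l2norm :: "'a measure \<Rightarrow> ('a \<Rightarrow> complex) \<Rightarrow> real" where
  "l2norm M f = sqrt (LINT x|M. (cmod (f x))\<^sup>2)"

type_synonym 'a op = "('a \<Rightarrow> complex) \<Rightarrow> ('a \<Rightarrow> complex)"

definition op_eq :: "'a measure \<Rightarrow> 'a op \<Rightarrow> 'a op \<Rightarrow> bool" where
  "op_eq M T S \<longleftrightarrow> (\<forall>h\<in>L2 M. AE x in M. T h x = S h x)"

definition op_bound :: "'a measure \<Rightarrow> 'a op \<Rightarrow> real \<Rightarrow> bool" where
  "op_bound M T C \<longleftrightarrow> (\<forall>h\<in>L2 M. l2norm M (T h) \<le> C * l2norm M h)"

definition bounded_op :: "'a measure \<Rightarrow> 'a op \<Rightarrow> bool" where
  "bounded_op M T \<longleftrightarrow> (\<forall>h\<in>L2 M. T h \<in> L2 M) \<and>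
     (\<forall>f\<in>L2 M. \<forall>g\<in>L2 M. \<forall>c. AE x in M. T (\<lambda>y. f y + c * g y) x = T f x + c * T g x) \<and>
     (\<exists>C. op_bound M T C)"

definition L2_kernel :: "'a measure \<Rightarrow> ('a \<Rightarrow> 'a \<Rightarrow> complex) \<Rightarrow> bool" where
  "L2_kernel M k \<longleftrightarrow> (\<lambda>z. k (fst z) (snd z)) \<in> borel_measurable (M \<Otimes>\<^sub>M M) \<and>
     integrable (M \<Otimes>\<^sub>M M) (\<lambda>z. (cmod (k (fst z) (snd z)))\<^sup>2)"

definition hs_op :: "'a measure \<Rightarrow> ('a \<Rightarrow> 'a \<Rightarrow> complex) \<Rightarrow> 'a op" where
  "hs_op M k = (\<lambda>h s. LINT t|M. k s t * h t)"

definition schur_multiplier :: "'a measure \<Rightarrow> ('a \<Rightarrow> 'a \<Rightarrow> complex) \<Rightarrow> bool" where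
  "schur_multiplier M \<phi> \<longleftrightarrow> (\<exists>C. \<forall>k. L2_kernel M k \<longrightarrow>
     (\<forall>D. op_bound M (hs_op M k) D \<longrightarrow> op_bound M (hs_op M (\<lambda>s t. \<phi> s t * k s t)) (C * D)))"

text \<open>Normal (w*-continuous) functionals on B(L^2) are exactly
T \<mapsto> \<Sum>n <T x_n, y_n> with \<Sum>n ||x_n|| ||y_n|| < \<infinity>.\<close>
definition normal_seq :: "'a measure \<Rightarrow> (nat \<Rightarrow> 'a \<Rightarrow> complex) \<Rightarrow> (nat \<Rightarrow> 'a \<Rightarrow> complex) \<Rightarrow> bool" where
  "normal_seq M x y \<longleftrightarrow> (\<forall>n. x n \<in> L2 M \<and> y n \<in> L2 M) \<and>
     summable (\<lambda>n. l2norm M (x n) * l2norm M (y n))"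

definition normal_fun :: "'a measure \<Rightarrow> (nat \<Rightarrow> 'a \<Rightarrow> complex) \<Rightarrow> (nat \<Rightarrow> 'a \<Rightarrow> complex) \<Rightarrow> 'a op \<Rightarrow> complex" where
  "normal_fun M x y T = (\<Sum>n. l2inner M (T (x n)) (y n))"

text \<open>A map W on B(L^2) is w*-continuous iff the composition of every normal functional
with W is again a normal functional (the w*-topology is the weak topology induced by
the normal functionals).\<close>
definition wstar_continuous :: "'a measure \<Rightarrow> ('a op \<Rightarrow> 'a op) \<Rightarrow> bool" where
  "wstar_continuous M W \<longleftrightarrow> (\<forall>x y. normal_seq M x y \<longrightarrow>
     (\<exists>x' y'. normal_seq M x' y' \<and>
        (\<forall>T. bounded_op M T \<longrightarrow> normal_fun M x y (W T) = normal_fun M x' y' T)))"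

text \<open>W is (a representative of) M_phi^infinity: a w*-continuous linear map on B(L^2)
extending S_k \<mapsto> S_{phi k} on the Hilbert-Schmidt class.\<close>
definition schur_ext :: "'a measure \<Rightarrow> ('a \<Rightarrow> 'a \<Rightarrow> complex) \<Rightarrow> ('a op \<Rightarrow> 'a op) \<Rightarrow> bool" where
  "schur_ext M \<phi> W \<longleftrightarrow>
     (\<forall>T. bounded_op M T \<longrightarrow> bounded_op M (W T)) \<and>
     (\<forall>T S. bounded_op M T \<longrightarrow> bounded_op M S \<longrightarrow> op_eq M T S \<longrightarrow> op_eq M (W T) (W S)) \<and>
     (\<forall>T S c. bounded_op M T \<longrightarrow> bounded_op M S \<longrightarrow>
        op_eq M (W (\<lambda>h x. T h x + c * S h x)) (\<lambda>h x. W T h x + c * W S h x)) \<and>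
     (\<forall>k. L2_kernel M k \<longrightarrow> op_eq M (W (hs_op M k)) (hs_op M (\<lambda>s t. \<phi> s t * k s t))) \<and>
     wstar_continuous M W"

end

theory Submission
  imports Defs
begin

text \<open>Approximating \<open>\<alpha>\<close> and \<open>\<beta>\<close> by bounded simple functions \<open>aM m\<close>, \<open>bM m\<close> one shows
  \<open>\<langle>M\<^sub>\<phi>\<^sup>\<infinity>(I) f, g\<rangle> = lim\<^sub>m \<integral> \<langle>aM m t, bM m t\<rangle> f(t) \<overline>g(t) dt = \<integral> \<langle>\<alpha>(t), \<beta>(t)\<rangle> f(t) \<overline>g(t) dt\<close>,
  i.e. \<open>M\<^sub>\<phi>\<^sup>\<infinity>(I)\<close> is multiplication by \<open>t \<mapsto> \<langle>\<alpha>(t), \<beta>(t)\<rangle>\<close>. To evaluate \<open>M\<^sub>\<phi>\<^sup>\<infinity>\<close> at the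
  identity, \<open>I\<close> is approached in the weak* sense by averaging operators \<open>E\<^sub>P\<close> over finite families of
  cells; each \<open>E\<^sub>P\<close> is Hilbert-Schmidt with kernel \<open>\<Sum>\<^sub>A\<^sub>\<in>\<^sub>P \<mu>(A)\<^sup>-\<^sup>1 1\<^sub>A\<times>\<^sub>A\<close>, so \<open>M\<^sub>\<phi>(E\<^sub>P)\<close>
  is explicit, and for \<open>\<phi>(s,t) = \<langle>aM m s, bM m t\<rangle>\<close> it tends to the multiplication operator as
  the cells are refined. The multiplication operator is the identity iff its symbol is \<open>1\<close> a.e.\<close>


section \<open>Square-integrable functions\<close>

lemma borel_measurable_cnj [measurable]:
  "f \<in> borel_measurable M \<Longrightarrow> (\<lambda>x. cnj (f x :: complex)) \<in> borel_measurable M"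
  by (intro borel_measurable_continuous_on[where f=cnj] continuous_intros)

lemma L2_cnj: "f \<in> L2 M \<Longrightarrow> (\<lambda>x. cnj (f x)) \<in> L2 M"
  unfolding L2_def by auto

lemma L2_of_real_norm: "f \<in> L2 M \<Longrightarrow> (\<lambda>x. complex_of_real (cmod (f x))) \<in> L2 M"
  unfolding L2_def by auto

lemma L2_integrable_mult:
  assumes "f \<in> L2 M" "g \<in> L2 M"
  shows "integrable M (\<lambda>x. f x * g x)"
proof (rule Bochner_Integration.integrable_bound[where f="\<lambda>x. (cmod (f x))\<^sup>2 + (cmod (g x))\<^sup>2"])
  show "integrable M (\<lambda>x. (cmod (f x))\<^sup>2 + (cmod (g x))\<^sup>2)" using assms by (auto simp: L2_def)
  show "(\<lambda>x. f x * g x) \<in> borel_measurable M" using assms by (auto simp: L2_def)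
  show "AE x in M. norm (f x * g x) \<le> norm ((cmod (f x))\<^sup>2 + (cmod (g x))\<^sup>2)"
  proof (intro AE_I2)
    fix x
    have "cmod (f x) * cmod (g x) \<le> (cmod (f x))\<^sup>2 + (cmod (g x))\<^sup>2"
      using sum_squares_bound[of "cmod (f x)" "cmod (g x)"] mult_nonneg_nonneg[OF norm_ge_zero norm_ge_zero, of "f x" "g x"]
      by linarith
    then show "norm (f x * g x) \<le> norm ((cmod (f x))\<^sup>2 + (cmod (g x))\<^sup>2)"
      by (simp add: norm_mult)
  qed
qed

lemma L2_integrable_mult_cnj:
  "f \<in> L2 M \<Longrightarrow> g \<in> L2 M \<Longrightarrow> integrable M (\<lambda>x. f x * cnj (g x))"
  by (rule L2_integrable_mult[OF _ L2_cnj])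

lemma L2_integrable_norm_mult:
  "f \<in> L2 M \<Longrightarrow> g \<in> L2 M \<Longrightarrow> integrable M (\<lambda>x. cmod (f x) * cmod (g x))"
  using integrable_norm[OF L2_integrable_mult] by (simp add: norm_mult)

lemma L2_add:
  assumes "f \<in> L2 M" "g \<in> L2 M"
  shows "(\<lambda>x. f x + g x) \<in> L2 M"
proof -
  have "integrable M (\<lambda>x. (cmod (f x + g x))\<^sup>2)"
  proof (rule Bochner_Integration.integrable_bound[where f="\<lambda>x. 2*(cmod (f x))\<^sup>2 + 2*(cmod (g x))\<^sup>2"])
    show "integrable M (\<lambda>x. 2*(cmod (f x))\<^sup>2 + 2*(cmod (g x))\<^sup>2)" using assms by (auto simp: L2_def)
    show "(\<lambda>x. (cmod (f x + g x))\<^sup>2) \<in> borel_measurable M" using assms by (auto simp: L2_def)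
    show "AE x in M. norm ((cmod (f x + g x))\<^sup>2) \<le> norm (2*(cmod (f x))\<^sup>2 + 2*(cmod (g x))\<^sup>2)"
    proof (intro AE_I2)
      fix x
      have t: "cmod (f x + g x) \<le> cmod (f x) + cmod (g x)" by (rule norm_triangle_ineq)
      have "(cmod (f x + g x))\<^sup>2 \<le> (cmod (f x) + cmod (g x))\<^sup>2"
        using t by (simp add: power_mono)
      also have "\<dots> \<le> 2*(cmod (f x))\<^sup>2 + 2*(cmod (g x))\<^sup>2"
        using sum_squares_bound[of "cmod (f x)" "cmod (g x)"] power2_sum[of "cmod (f x)" "cmod (g x)"]
        by linarith
      finally show "norm ((cmod (f x + g x))\<^sup>2) \<le> norm (2*(cmod (f x))\<^sup>2 + 2*(cmod (g x))\<^sup>2)"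
        by simp
    qed
  qed
  then show ?thesis using assms by (auto simp: L2_def)
qed

lemma L2_bounded_mult:
  assumes "f \<in> L2 M" "g \<in> borel_measurable M" "\<And>x. x \<in> space M \<Longrightarrow> cmod (g x) \<le> B"
  shows "(\<lambda>x. g x * f x) \<in> L2 M"
proof -
  have B: "0 \<le> B" if "space M \<noteq> {}" using assms(3) that norm_ge_zero order_trans by blast
  have "integrable M (\<lambda>x. (cmod (g x * f x))\<^sup>2)"
  proof (rule Bochner_Integration.integrable_bound[where f="\<lambda>x. B\<^sup>2 * (cmod (f x))\<^sup>2"])
    show "integrable M (\<lambda>x. B\<^sup>2 * (cmod (f x))\<^sup>2)" using assms by (auto simp: L2_def)
    show "(\<lambda>x. (cmod (g x * f x))\<^sup>2) \<in> borel_measurable M" using assms by (auto simp: L2_def)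
    show "AE x in M. norm ((cmod (g x * f x))\<^sup>2) \<le> norm (B\<^sup>2 * (cmod (f x))\<^sup>2)"
    proof (rule AE_I2)
      fix x assume x: "x \<in> space M"
      have "cmod (g x) * cmod (f x) \<le> B * cmod (f x)" using assms(3)[OF x] by (simp add: mult_right_mono)
      then have "(cmod (g x) * cmod (f x))\<^sup>2 \<le> (B * cmod (f x))\<^sup>2" by (simp add: power_mono)
      then show "norm ((cmod (g x * f x))\<^sup>2) \<le> norm (B\<^sup>2 * (cmod (f x))\<^sup>2)"
        by (simp add: norm_mult power_mult_distrib)
    qed
  qed
  then show ?thesis using assms by (auto simp: L2_def)
qed

lemma L2_cmult: "f \<in> L2 M \<Longrightarrow> (\<lambda>x. c * f x) \<in> L2 M"
  using L2_bounded_mult[of f M "\<lambda>_. c" "cmod c"] by auto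

lemma L2_zero: "(\<lambda>x. 0) \<in> L2 M"
  by (simp add: L2_def)

lemma L2_diff: "f \<in> L2 M \<Longrightarrow> g \<in> L2 M \<Longrightarrow> (\<lambda>x. f x - g x) \<in> L2 M"
  using L2_add[of f M "\<lambda>x. (-1) * g x"] L2_cmult[of g M "-1"] by simp

lemma L2_indicator:
  assumes "A \<in> sets M" "emeasure M A < \<infinity>"
  shows "(\<lambda>x. indicator A x :: complex) \<in> L2 M"
proof -
  have "(\<lambda>x. (cmod (indicator A x :: complex))\<^sup>2) = indicator A"
    by (auto simp: indicator_def)
  then show ?thesis using assms by (auto simp: L2_def)
qed

lemma L2_sum:
  "finite I \<Longrightarrow> (\<And>i. i \<in> I \<Longrightarrow> f i \<in> L2 M) \<Longrightarrow> (\<lambda>x. \<Sum>i\<in>I. f i x) \<in> L2 M"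
  by (induction I rule: finite_induct) (auto intro: L2_add L2_zero)

lemma l2norm_nonneg: "0 \<le> l2norm M f"
  by (simp add: l2norm_def)

lemma l2norm_power2: "(l2norm M f)\<^sup>2 = (LINT x|M. (cmod (f x))\<^sup>2)"
  by (simp add: l2norm_def)

lemma l2norm_zero [simp]: "l2norm M (\<lambda>x. 0) = 0"
  by (simp add: l2norm_def)

lemma l2norm_of_real_norm: "l2norm M (\<lambda>t. complex_of_real (cmod (f t))) = l2norm M f"
  unfolding l2norm_def by simp

lemma l2norm_cmult: "l2norm M (\<lambda>x. c * f x) = cmod c * l2norm M f"
  unfolding l2norm_def by (simp add: norm_mult power_mult_distrib real_sqrt_mult)

lemma l2norm_minus_commute: "l2norm M (\<lambda>x. f x - g x) = l2norm M (\<lambda>x. g x - f x)"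
  unfolding l2norm_def by (simp add: norm_minus_commute)

lemma l2norm_cong_AE:
  "f \<in> borel_measurable M \<Longrightarrow> g \<in> borel_measurable M \<Longrightarrow> AE x in M. f x = g x \<Longrightarrow>
    l2norm M f = l2norm M g"
  unfolding l2norm_def by (intro arg_cong[where f=sqrt] integral_cong_AE) auto

lemma l2norm_eq_0_AE:
  assumes "f \<in> L2 M" "l2norm M f = 0"
  shows "AE x in M. f x = 0"
proof -
  have "(LINT x|M. (cmod (f x))\<^sup>2) = 0"
    using assms(2) l2norm_power2[of M f] by simp
  then have "AE x in M. (cmod (f x))\<^sup>2 = 0"
    using assms(1) by (subst integral_nonneg_eq_0_iff_AE[symmetric]) (auto simp: L2_def)
  then show ?thesis by auto
qed

lemma integral_mult_le_sqrt:
  fixes f g :: "'a \<Rightarrow> real"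
  assumes [measurable]: "f \<in> borel_measurable M" "g \<in> borel_measurable M"
    and nonneg: "\<And>x. 0 \<le> f x" "\<And>x. 0 \<le> g x"
    and "integrable M (\<lambda>x. (f x)\<^sup>2)" "integrable M (\<lambda>x. (g x)\<^sup>2)" "integrable M (\<lambda>x. f x * g x)"
  shows "(LINT x|M. f x * g x) \<le> sqrt (LINT x|M. (f x)\<^sup>2) * sqrt (LINT x|M. (g x)\<^sup>2)"
proof -
  have "ennreal ((LINT x|M. f x * g x)\<^sup>2) = (\<integral>\<^sup>+x. ennreal (f x) * ennreal (g x) \<partial>M)\<^sup>2"
    using nn_integral_eq_integral[OF assms(7)] nonneg by (simp add: ennreal_mult'' ennreal_power)
  also have "\<dots> \<le> (\<integral>\<^sup>+x. ennreal (f x) ^ 2 \<partial>M) * (\<integral>\<^sup>+x. ennreal (g x) ^ 2 \<partial>M)"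
    by (rule Cauchy_Schwarz_nn_integral) auto
  also have "\<dots> = ennreal ((LINT x|M. (f x)\<^sup>2) * (LINT x|M. (g x)\<^sup>2))"
    using nn_integral_eq_integral[OF assms(5)] nn_integral_eq_integral[OF assms(6)] nonneg
    by (simp add: ennreal_power ennreal_mult)
  finally have "(LINT x|M. f x * g x)\<^sup>2 \<le> (LINT x|M. (f x)\<^sup>2) * (LINT x|M. (g x)\<^sup>2)"
    by (simp add: ennreal_le_iff)
  from real_le_rsqrt[OF this] show ?thesis
    by (simp add: real_sqrt_mult)
qed

lemma L2_integral_norm_mult_le:
  assumes "f \<in> L2 M" "g \<in> L2 M"
  shows "(LINT x|M. cmod (f x) * cmod (g x)) \<le> l2norm M f * l2norm M g"
  unfolding l2norm_def using assms L2_integrable_norm_mult[OF assms]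
  by (intro integral_mult_le_sqrt) (auto simp: L2_def)

lemma l2inner_norm_le:
  assumes "f \<in> L2 M" "g \<in> L2 M"
  shows "cmod (l2inner M f g) \<le> l2norm M f * l2norm M g"
proof -
  have "cmod (l2inner M f g) \<le> (LINT x|M. norm (f x * cnj (g x)))"
    unfolding l2inner_def by (rule integral_norm_bound)
  also have "\<dots> = (LINT x|M. cmod (f x) * cmod (g x))"
    by (simp add: norm_mult)
  finally show ?thesis
    using L2_integral_norm_mult_le[OF assms] by linarith
qed

lemma l2norm_triangle:
  assumes f: "f \<in> L2 M" and g: "g \<in> L2 M"
  shows "l2norm M (\<lambda>x. f x + g x) \<le> l2norm M f + l2norm M g"
proof -
  have fg: "integrable M (\<lambda>x. cmod (f x) * cmod (g x))"
    by (rule L2_integrable_norm_mult[OF f g])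
  have "(l2norm M (\<lambda>x. f x + g x))\<^sup>2
      \<le> (LINT x|M. (cmod (f x))\<^sup>2 + (cmod (g x))\<^sup>2 + 2 * (cmod (f x) * cmod (g x)))"
    unfolding l2norm_power2
  proof (intro integral_mono)
    have "(cmod (f x + g x))\<^sup>2 \<le> (cmod (f x) + cmod (g x))\<^sup>2" for x
      by (simp add: norm_triangle_ineq power_mono)
    then show "(cmod (f x + g x))\<^sup>2 \<le> (cmod (f x))\<^sup>2 + (cmod (g x))\<^sup>2 + 2 * (cmod (f x) * cmod (g x))" for x
      by (simp add: power2_sum mult.assoc)
  qed (use f g fg L2_add[OF f g] in \<open>auto simp: L2_def\<close>)
  also have "\<dots> = (l2norm M f)\<^sup>2 + (l2norm M g)\<^sup>2 + 2 * (LINT x|M. cmod (f x) * cmod (g x))"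
    using f g fg by (simp add: l2norm_power2 L2_def)
  also have "\<dots> \<le> (l2norm M f + l2norm M g)\<^sup>2"
    using L2_integral_norm_mult_le[OF f g] by (simp add: power2_sum)
  finally show ?thesis
    by (rule power2_le_imp_le) (simp add: l2norm_nonneg)
qed

lemma l2norm_diff_le:
  assumes "f \<in> L2 M" "g \<in> L2 M"
  shows "l2norm M (\<lambda>x. f x - g x) \<le> l2norm M f + l2norm M g"
  using l2norm_triangle[OF assms(1) L2_cmult[OF assms(2)], of "-1"] l2norm_cmult[of M "-1" g]
  by simp

lemma l2inner_diff_left:
  assumes "f \<in> L2 M" "g \<in> L2 M" "h \<in> L2 M"
  shows "l2inner M (\<lambda>x. f x - g x) h = l2inner M f h - l2inner M g h"
  unfolding l2inner_def using L2_integrable_mult_cnj[OF assms(1,3)] L2_integrable_mult_cnj[OF assms(2,3)]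
  by (simp add: left_diff_distrib)

lemma l2inner_zero_right: "l2inner M f (\<lambda>x. 0) = 0"
  by (simp add: l2inner_def)

lemma l2inner_self: "l2inner M f f = complex_of_real ((l2norm M f)\<^sup>2)"
  unfolding l2inner_def l2norm_power2
  by (simp add: complex_norm_square[symmetric] del: of_real_power)

lemma l2inner_cong_AE:
  "f \<in> borel_measurable M \<Longrightarrow> f' \<in> borel_measurable M \<Longrightarrow> AE x in M. f x = f' x \<Longrightarrow>
    g \<in> borel_measurable M \<Longrightarrow> l2inner M f g = l2inner M f' g"
  unfolding l2inner_def by (intro integral_cong_AE) auto


lemma L2_AE_eq_if_l2inner_eq:
  assumes f: "f \<in> L2 M" and f': "f' \<in> L2 M"
    and eq: "\<And>g. g \<in> L2 M \<Longrightarrow> l2inner M f g = l2inner M f' g"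
  shows "AE x in M. f x = f' x"
proof -
  define d where "d x = f x - f' x" for x
  have d: "d \<in> L2 M"
    unfolding d_def using L2_diff[OF f f'] .
  have "complex_of_real ((l2norm M d)\<^sup>2) = l2inner M f d - l2inner M f' d"
    unfolding l2inner_self[symmetric] d_def by (rule l2inner_diff_left[OF f f' d[unfolded d_def]])
  then have "l2norm M d = 0"
    using eq[OF d] by simp
  then show ?thesis
    using l2norm_eq_0_AE[OF d] by (auto simp: d_def)
qed


text \<open>A bounded multiplication operator that acts as the identity has symbol \<open>1\<close>: test it on
  \<open>f = 1\<^sub>A\<close> and \<open>g = (d - 1) 1\<^sub>A\<close> for sets \<open>A\<close> of finite measure exhausting the space.\<close>
lemma AE_eq_1_if_mult_l2inner_eq:
  assumes sf: "sigma_finite_measure M" and d: "d \<in> borel_measurable M" "\<And>t. cmod (d t) \<le> C"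
    and eq: "\<And>f g. f \<in> L2 M \<Longrightarrow> g \<in> L2 M \<Longrightarrow> (LINT t|M. d t * f t * cnj (g t)) = l2inner M f g"
  shows "AE t in M. d t = 1"
proof -
  obtain A :: "nat \<Rightarrow> 'a set" where A: "range A \<subseteq> sets M" "(\<Union>i. A i) = space M" "\<And>i. emeasure M (A i) \<noteq> \<infinity>"
    using sigma_finite_measure.sigma_finite[OF sf] by blast
  have Ai: "AE t in M. t \<in> A i \<longrightarrow> d t = 1" for i
  proof -
    have As[measurable]: "A i \<in> sets M" and Af: "emeasure M (A i) < \<infinity>"
      using A(1) A(3)[of i] by (auto simp: less_top)
    define f where "f t = (indicator (A i) t :: complex)" for t
    define g where "g t = (d t - 1) * f t" for t
    define h where "h t = indicator (A i) t * (cmod (d t - 1))\<^sup>2" for t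
    have fL: "f \<in> L2 M"
      unfolding f_def[abs_def] by (rule L2_indicator[OF As Af])
    have gL: "g \<in> L2 M"
      unfolding g_def
    proof (rule L2_bounded_mult[where B="C + 1", OF fL])
      show "(\<lambda>t. d t - 1) \<in> borel_measurable M"
        using d(1) by measurable
      show "cmod (d t - 1) \<le> C + 1" for t
        using norm_triangle_ineq4[of "d t" 1] d(2)[of t] by simp
    qed
    have dfL: "(\<lambda>t. d t * f t) \<in> L2 M"
      using d by (intro L2_bounded_mult[where B=C, OF fL]) auto
    have pw: "d t * f t * cnj (g t) - f t * cnj (g t) = complex_of_real (h t)" for t
      using complex_norm_square[of "d t - 1"]
      by (simp add: f_def g_def h_def indicator_def algebra_simps)
    have i1: "integrable M (\<lambda>t. d t * f t * cnj (g t))" and i2: "integrable M (\<lambda>t. f t * cnj (g t))"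
      by (rule L2_integrable_mult_cnj[OF dfL gL], rule L2_integrable_mult_cnj[OF fL gL])
    have "integrable M (\<lambda>t. complex_of_real (h t))"
      using Bochner_Integration.integrable_diff[OF i1 i2] unfolding pw .
    from integrable_Re[OF this] have ih: "integrable M h"
      by simp
    have "complex_of_real (LINT t|M. h t) = (LINT t|M. d t * f t * cnj (g t) - f t * cnj (g t))"
      unfolding pw by (rule integral_complex_of_real[symmetric])
    also have "\<dots> = 0"
      using i1 i2 eq[OF fL gL] by (simp add: l2inner_def)
    finally have "integral\<^sup>L M h = 0"
      by simp
    moreover have "AE t in M. 0 \<le> h t"
      by (simp add: h_def)
    ultimately have "AE t in M. h t = 0"
      using integral_nonneg_eq_0_iff_AE[OF ih] by blast
    then show ?thesis
      by eventually_elim (auto simp: h_def)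
  qed
  have "AE t in M. \<forall>i. t \<in> A i \<longrightarrow> d t = 1"
    by (rule AE_all_countable[THEN iffD2]) (rule allI, rule Ai)
  then show ?thesis
    using AE_space by eventually_elim (use A(2) in blast)
qed

section \<open>Averaging over finitely many cells\<close>

definition finite_cells :: "'a measure \<Rightarrow> 'a set set \<Rightarrow> bool" where
  "finite_cells M P \<longleftrightarrow> finite P \<and> disjoint P \<and> (\<forall>A\<in>P. A \<in> sets M \<and> 0 < measure M A \<and> emeasure M A < \<infinity>)"

definition cell_avg_kernel :: "'a measure \<Rightarrow> 'a set set \<Rightarrow> 'a \<Rightarrow> 'a \<Rightarrow> complex" where
  "cell_avg_kernel M P s t = (\<Sum>A\<in>P. (1 / complex_of_real (measure M A)) * (indicator A s * indicator A t))"

definition cell_avg :: "'a measure \<Rightarrow> 'a set set \<Rightarrow> ('a \<Rightarrow> complex) \<Rightarrow> 'a \<Rightarrow> complex" where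
  "cell_avg M P h s = (\<Sum>A\<in>P. ((LINT t|M. indicator A t * h t) / complex_of_real (measure M A)) * indicator A s)"

lemma sum_indicator_disjoint:
  fixes c :: "'i \<Rightarrow> 'b::comm_ring_1"
  assumes "finite P" "\<And>A B. A \<in> P \<Longrightarrow> B \<in> P \<Longrightarrow> A \<noteq> B \<Longrightarrow> S A \<inter> S B = {}" "Az \<in> P" "z \<in> S Az"
  shows "(\<Sum>A\<in>P. c A * indicator (S A) z) = c Az"
proof -
  have "(\<Sum>A\<in>P. c A * indicator (S A) z) = (\<Sum>A\<in>P. if A = Az then c A else 0)"
  proof (intro sum.cong refl)
    fix A assume "A \<in> P"
    then show "c A * indicator (S A) z = (if A = Az then c A else 0)"
      using assms(2)[of A Az] assms(3,4) by (auto simp: indicator_def)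
  qed
  also have "\<dots> = c Az" using assms(1,3) by simp
  finally show ?thesis .
qed

lemma sum_indicator_outside:
  fixes c :: "'i \<Rightarrow> 'b::comm_ring_1"
  assumes "\<And>A. A \<in> P \<Longrightarrow> z \<notin> S A"
  shows "(\<Sum>A\<in>P. c A * indicator (S A) z) = 0"
  using assms by (intro sum.neutral) auto

lemma finite_cellsD:
  assumes "finite_cells M P"
  shows "finite P" "\<And>A B. A \<in> P \<Longrightarrow> B \<in> P \<Longrightarrow> A \<noteq> B \<Longrightarrow> A \<inter> B = {}"
    "\<And>A. A \<in> P \<Longrightarrow> A \<in> sets M" "\<And>A. A \<in> P \<Longrightarrow> 0 < measure M A"
    "\<And>A. A \<in> P \<Longrightarrow> emeasure M A < \<infinity>"
  using assms unfolding finite_cells_def disjoint_def pairwise_def disjnt_def by auto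

lemma finite_cells_indicator_L2: "finite_cells M P \<Longrightarrow> A \<in> P \<Longrightarrow> (\<lambda>x. indicator A x :: complex) \<in> L2 M"
  using finite_cellsD by (intro L2_indicator) auto

lemma finite_cells_integrable_indicator_mult: "finite_cells M P \<Longrightarrow> A \<in> P \<Longrightarrow> h \<in> L2 M \<Longrightarrow> integrable M (\<lambda>t. indicator A t * h t)"
  using L2_integrable_mult finite_cells_indicator_L2 by blast

lemma cell_avg_kernel_integral:
  assumes P: "finite_cells M P" and u: "\<And>A. A \<in> P \<Longrightarrow> integrable M (\<lambda>t. indicator A t * u t)"
  shows "(LINT t|M. cell_avg_kernel M P s t * u t) = cell_avg M P u s"
proof -
  have "(\<lambda>t. cell_avg_kernel M P s t * u t) = (\<lambda>t. \<Sum>A\<in>P. (indicator A s / complex_of_real (measure M A)) * (indicator A t * u t))"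
    by (auto simp: cell_avg_kernel_def sum_distrib_right intro!: sum.cong)
  then have "(LINT t|M. cell_avg_kernel M P s t * u t) = (\<Sum>A\<in>P. LINT t|M. (indicator A s / complex_of_real (measure M A)) * (indicator A t * u t))"
    using u by (simp add: Bochner_Integration.integral_sum)
  also have "\<dots> = cell_avg M P u s"
    unfolding cell_avg_def by (intro sum.cong) auto
  finally show ?thesis .
qed

lemma hs_op_cell_avg_kernel: "finite_cells M P \<Longrightarrow> h \<in> L2 M \<Longrightarrow> hs_op M (cell_avg_kernel M P) h s = cell_avg M P h s"
  unfolding hs_op_def by (rule cell_avg_kernel_integral) (auto intro: finite_cells_integrable_indicator_mult)

lemma cell_avg_L2: "finite_cells M P \<Longrightarrow> cell_avg M P h \<in> L2 M"
  unfolding cell_avg_def using finite_cells_indicator_L2 finite_cellsD(1) by (intro L2_sum L2_cmult) auto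

lemma cell_avg_linear:
  assumes P: "finite_cells M P" and f: "\<And>A. A \<in> P \<Longrightarrow> integrable M (\<lambda>t. indicator A t * f t)"
    and g: "\<And>A. A \<in> P \<Longrightarrow> integrable M (\<lambda>t. indicator A t * g t)"
  shows "cell_avg M P (\<lambda>y. f y + c * g y) s = cell_avg M P f s + c * cell_avg M P g s"
proof -
  have "\<And>A. A \<in> P \<Longrightarrow> (LINT t|M. indicator A t * (f t + c * g t)) = (LINT t|M. indicator A t * f t) + c * (LINT t|M. indicator A t * g t)"
  proof -
    fix A assume A: "A \<in> P"
    have "(LINT t|M. indicator A t * (f t + c * g t)) = (LINT t|M. indicator A t * f t + c * (indicator A t * g t))"
      by (simp add: algebra_simps)
    also have "\<dots> = (LINT t|M. indicator A t * f t) + c * (LINT t|M. indicator A t * g t)"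
      using f[OF A] g[OF A] by simp
    finally show "?thesis A" .
  qed
  then show ?thesis unfolding cell_avg_def
    by (simp add: sum_distrib_left sum.distrib[symmetric] algebra_simps add_divide_distrib)
qed

lemma cell_avg_diff:
  assumes P: "finite_cells M P" and f: "\<And>A. A \<in> P \<Longrightarrow> integrable M (\<lambda>t. indicator A t * f t)"
    and g: "\<And>A. A \<in> P \<Longrightarrow> integrable M (\<lambda>t. indicator A t * g t)"
  shows "cell_avg M P (\<lambda>y. f y - g y) s = cell_avg M P f s - cell_avg M P g s"
  using cell_avg_linear[OF P f g, of "-1" s] by simp

lemma norm_indicator_complex [simp]: "cmod (indicator A x :: complex) = indicator A x"
  by (simp add: indicator_def)

lemma norm_indicator_complex_power2 [simp]: "(cmod (indicator A x :: complex))\<^sup>2 = indicator A x"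
  by (simp add: indicator_def)

lemma indicator_power2_real [simp]: "(indicator A x :: real)\<^sup>2 = indicator A x"
  by (simp add: indicator_def)

lemma integral_indicator_mult_power2_le:
  assumes A: "A \<in> sets M" "emeasure M A < \<infinity>" and h: "h \<in> L2 M"
  shows "(cmod (LINT t|M. indicator A t * h t))\<^sup>2 \<le> measure M A * (LINT t|M. indicator A t * (cmod (h t))\<^sup>2)"
proof -
  have iA: "(\<lambda>x. indicator A x :: complex) \<in> L2 M" using L2_indicator[OF A] .
  have iAh: "(\<lambda>t. indicator A t * h t) \<in> L2 M"
    using L2_bounded_mult[OF h, of "indicator A" 1] A by (auto simp: indicator_def)
  have "cmod (LINT t|M. indicator A t * h t) \<le> (LINT t|M. norm (indicator A t * h t))"
    by (rule integral_norm_bound)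
  also have "\<dots> = (LINT t|M. cmod (indicator A t :: complex) * cmod (indicator A t * h t))"
    by (intro Bochner_Integration.integral_cong) (auto simp: indicator_def)
  also have "\<dots> \<le> l2norm M (indicator A) * l2norm M (\<lambda>t. indicator A t * h t)"
    by (rule L2_integral_norm_mult_le[OF iA iAh])
  finally have *: "cmod (LINT t|M. indicator A t * h t) \<le> l2norm M (indicator A) * l2norm M (\<lambda>t. indicator A t * h t)" .
  have "(cmod (LINT t|M. indicator A t * h t))\<^sup>2 \<le> (l2norm M (indicator A) * l2norm M (\<lambda>t. indicator A t * h t))\<^sup>2"
    using * by (intro power_mono) auto
  also have "\<dots> = (l2norm M (indicator A))\<^sup>2 * (l2norm M (\<lambda>t. indicator A t * h t))\<^sup>2"
    by (simp add: power_mult_distrib)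
  also have "(l2norm M (indicator A))\<^sup>2 = measure M A"
  proof -
    have "(\<lambda>x. (cmod (indicator A x :: complex))\<^sup>2) = indicator A" by (auto simp: indicator_def)
    then show ?thesis using l2norm_power2[of M "indicator A"] A sets.sets_into_space[OF A(1)]
      by (simp add: Int_absorb2)
  qed
  also have "(l2norm M (\<lambda>t. indicator A t * h t))\<^sup>2 = (LINT t|M. indicator A t * (cmod (h t))\<^sup>2)"
    using l2norm_power2[of M "\<lambda>t. indicator A t * h t"] by (simp add: norm_mult power_mult_distrib)
  finally show ?thesis .
qed

lemma integral_real_indicator: "A \<in> sets M \<Longrightarrow> (LINT x|M. indicator A x :: real) = measure M A"
  using sets.sets_into_space by (simp add: Int_absorb2)

lemma cells_sum_indicator_in:
  fixes c :: "'a set \<Rightarrow> 'b::comm_ring_1"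
  assumes P: "finite_cells M P" and A: "A \<in> P" "s \<in> A"
  shows "(\<Sum>B\<in>P. c B * indicator B s) = c A"
proof -
  have "(\<Sum>B\<in>P. c B * indicator B s) = (\<Sum>B\<in>P. if B = A then c B else 0)"
  proof (intro sum.cong refl)
    fix B assume "B \<in> P"
    then show "c B * indicator B s = (if B = A then c B else 0)"
      using finite_cellsD(2)[OF P, of B A] A by (auto simp: indicator_def)
  qed
  also have "\<dots> = c A"
    using finite_cellsD(1)[OF P] A by simp
  finally show ?thesis .
qed

lemma cells_sum_indicator_notin:
  fixes c :: "'a set \<Rightarrow> 'b::comm_ring_1"
  shows "(\<And>A. A \<in> P \<Longrightarrow> s \<notin> A) \<Longrightarrow> (\<Sum>B\<in>P. c B * indicator B s) = 0"
  by (intro sum.neutral) auto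

lemma norm_cells_sum_indicator_power2:
  assumes "finite_cells M P"
  shows "(cmod (\<Sum>A\<in>P. c A * indicator A s))\<^sup>2 = (\<Sum>A\<in>P. (cmod (c A))\<^sup>2 * indicator A s)"
proof (cases "\<exists>A\<in>P. s \<in> A")
  case True
  then obtain A where A: "A \<in> P" "s \<in> A" by blast
  show ?thesis
    using cells_sum_indicator_in[OF assms A, of c] cells_sum_indicator_in[OF assms A, of "\<lambda>A. (cmod (c A))\<^sup>2"]
    by simp
next
  case False
  then show ?thesis
    using cells_sum_indicator_notin[of P s] by auto
qed

lemma cells_sum_indicator_le:
  assumes "finite_cells M P" "0 \<le> x"
  shows "(\<Sum>A\<in>P. x * indicator A s) \<le> (x::real)"
proof (cases "\<exists>A\<in>P. s \<in> A")
  case True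
  then obtain A where "A \<in> P" "s \<in> A" by blast
  then show ?thesis
    using cells_sum_indicator_in[OF assms(1), of A s "\<lambda>_. x"] by simp
next
  case False
  then show ?thesis
    using cells_sum_indicator_notin[of P s "\<lambda>_. x"] assms(2) by auto
qed

lemma norm_cell_avg_coeff_le:
  assumes "A \<in> sets M" "0 < measure M A" "emeasure M A < \<infinity>" "h \<in> L2 M"
  shows "(cmod ((LINT t|M. indicator A t * h t) / complex_of_real (measure M A)))\<^sup>2 * measure M A
    \<le> (LINT t|M. (cmod (h t))\<^sup>2 * indicator A t)"
proof -
  let ?I = "LINT t|M. indicator A t * h t"
  have "(cmod (?I / complex_of_real (measure M A)))\<^sup>2 * measure M A = (cmod ?I)\<^sup>2 / measure M A"
    using assms(2) by (simp add: norm_divide power2_eq_square)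
  also have "\<dots> \<le> (LINT t|M. indicator A t * (cmod (h t))\<^sup>2)"
    using integral_indicator_mult_power2_le[OF assms(1,3,4)] assms(2)
    by (simp add: divide_le_eq mult.commute)
  finally show ?thesis
    by (simp add: mult.commute)
qed

lemma l2norm_cell_avg_le:
  assumes P: "finite_cells M P" and h: "h \<in> L2 M"
  shows "l2norm M (cell_avg M P h) \<le> l2norm M h"
proof -
  define c where "c A = (LINT t|M. indicator A t * h t) / complex_of_real (measure M A)" for A
  have sets: "A \<in> sets M" and fin: "emeasure M A < \<infinity>" if "A \<in> P" for A
    using finite_cellsD(3,5)[OF P that] by auto
  have hi: "integrable M (\<lambda>t. (cmod (h t))\<^sup>2)"
    using h by (simp add: L2_def)
  have "(LINT s|M. (cmod (cell_avg M P h s))\<^sup>2) = (LINT s|M. (\<Sum>A\<in>P. (cmod (c A))\<^sup>2 * indicator A s))"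
    unfolding cell_avg_def c_def[symmetric] norm_cells_sum_indicator_power2[OF P] ..
  also have "\<dots> = (\<Sum>A\<in>P. (cmod (c A))\<^sup>2 * measure M A)"
    using sets fin by (simp add: Bochner_Integration.integral_sum integral_real_indicator)
  also have "\<dots> \<le> (\<Sum>A\<in>P. LINT t|M. (cmod (h t))\<^sup>2 * indicator A t)"
    unfolding c_def using finite_cellsD(3,4,5)[OF P] h by (intro sum_mono norm_cell_avg_coeff_le)
  also have "\<dots> = (LINT t|M. (\<Sum>A\<in>P. (cmod (h t))\<^sup>2 * indicator A t))"
    using sets hi by (simp add: Bochner_Integration.integral_sum integrable_real_mult_indicator)
  also have "\<dots> \<le> (LINT t|M. (cmod (h t))\<^sup>2)"
    using sets hi cells_sum_indicator_le[OF P]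
    by (intro integral_mono Bochner_Integration.integrable_sum integrable_real_mult_indicator) auto
  finally show ?thesis
    unfolding l2norm_def by (rule real_sqrt_le_mono)
qed

lemma bounded_op_cell_avg:
  assumes P: "finite_cells M P"
  shows "bounded_op M (hs_op M (cell_avg_kernel M P))"
  unfolding bounded_op_def
proof (intro conjI ballI allI)
  fix h assume h: "h \<in> L2 M"
  have "hs_op M (cell_avg_kernel M P) h = cell_avg M P h" using hs_op_cell_avg_kernel[OF P h] by auto
  then show "hs_op M (cell_avg_kernel M P) h \<in> L2 M" using cell_avg_L2[OF P] by simp
next
  fix f g c assume f: "f \<in> L2 M" and g: "g \<in> L2 M"
  have fg: "(\<lambda>y. f y + c * g y) \<in> L2 M" using L2_add[OF f L2_cmult[OF g]] .
  show "AE x in M. hs_op M (cell_avg_kernel M P) (\<lambda>y. f y + c * g y) x = hs_op M (cell_avg_kernel M P) f x + c * hs_op M (cell_avg_kernel M P) g x"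
    using hs_op_cell_avg_kernel[OF P fg] hs_op_cell_avg_kernel[OF P f] hs_op_cell_avg_kernel[OF P g]
      cell_avg_linear[OF P finite_cells_integrable_indicator_mult[OF P _ f] finite_cells_integrable_indicator_mult[OF P _ g]] by simp
next
  show "\<exists>C. op_bound M (hs_op M (cell_avg_kernel M P)) C"
    unfolding op_bound_def
  proof (intro exI[of _ 1] ballI)
    fix h assume h: "h \<in> L2 M"
    have "hs_op M (cell_avg_kernel M P) h = cell_avg M P h" using hs_op_cell_avg_kernel[OF P h] by auto
    then show "l2norm M (hs_op M (cell_avg_kernel M P) h) \<le> 1 * l2norm M h" using l2norm_cell_avg_le[OF P h] by simp
  qed
qed

lemma L2_kernel_cell_avg_kernel:
  assumes sf: "sigma_finite_measure M" and P: "finite_cells M P"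
  shows "L2_kernel M (cell_avg_kernel M P)"
  unfolding L2_kernel_def
proof
  have fin: "finite P" using finite_cellsD(1)[OF P] .
  have kk: "cell_avg_kernel M P s t = (\<Sum>A\<in>P. (1 / complex_of_real (measure M A)) * indicator (A \<times> A) (s, t))" for s t
    unfolding cell_avg_kernel_def by (intro sum.cong refl) (simp add: indicator_times)
  show "(\<lambda>z. cell_avg_kernel M P (fst z) (snd z)) \<in> borel_measurable (M \<Otimes>\<^sub>M M)"
    unfolding cell_avg_kernel_def
  proof (rule borel_measurable_sum)
    fix A assume "A \<in> P"
    then have [measurable]: "A \<in> sets M" using finite_cellsD(3)[OF P] by auto
    show "(\<lambda>z. (1 / complex_of_real (measure M A)) * (indicator A (fst z) * indicator A (snd z))) \<in> borel_measurable (M \<Otimes>\<^sub>M M)"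
      by measurable
  qed
  have disj: "\<And>A B. A \<in> P \<Longrightarrow> B \<in> P \<Longrightarrow> A \<noteq> B \<Longrightarrow> (\<lambda>A. A \<times> A) A \<inter> (\<lambda>A. A \<times> A) B = {}"
    using finite_cellsD(2)[OF P] by auto
  have pw: "(cmod (cell_avg_kernel M P (fst z) (snd z)))\<^sup>2 = (\<Sum>A\<in>P. (1 / measure M A)\<^sup>2 * indicator (A \<times> A) z)" for z
  proof (cases "\<exists>A0\<in>P. z \<in> A0 \<times> A0")
    case True then obtain A0 where A0: "A0 \<in> P" "z \<in> A0 \<times> A0" by auto
    have "cell_avg_kernel M P (fst z) (snd z) = 1 / complex_of_real (measure M A0)" unfolding kk
      using sum_indicator_disjoint[where S="\<lambda>A. A \<times> A" and c="\<lambda>A. 1 / complex_of_real (measure M A)" and z=z and Az=A0 and P=P, OF fin disj] A0 by simp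
    moreover have "(\<Sum>A\<in>P. (1 / measure M A)\<^sup>2 * indicator (A \<times> A) z) = (1 / measure M A0)\<^sup>2"
      using sum_indicator_disjoint[where S="\<lambda>A. A \<times> A" and c="\<lambda>A. (1 / measure M A)\<^sup>2" and z=z and Az=A0 and P=P, OF fin disj] A0 by simp
    moreover have "measure M A0 \<ge> 0" by simp
    ultimately show ?thesis by (simp add: norm_divide)
  next
    case False
    then have "cell_avg_kernel M P (fst z) (snd z) = 0" unfolding kk
      using sum_indicator_outside[where S="\<lambda>A. A \<times> A" and c="\<lambda>A. 1 / complex_of_real (measure M A)" and z=z and P=P] by auto
    moreover have "(\<Sum>A\<in>P. (1 / measure M A)\<^sup>2 * indicator (A \<times> A) z) = 0"
      using False sum_indicator_outside[where S="\<lambda>A. A \<times> A" and c="\<lambda>A. (1 / measure M A)\<^sup>2" and z=z and P=P] by auto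
    ultimately show ?thesis by simp
  qed
  have "integrable (M \<Otimes>\<^sub>M M) (\<lambda>z. \<Sum>A\<in>P. (1 / measure M A)\<^sup>2 * indicator (A \<times> A) z)"
  proof (rule Bochner_Integration.integrable_sum)
    fix A assume A: "A \<in> P"
    have As: "A \<in> sets M" and Af: "emeasure M A < \<infinity>" using finite_cellsD(3,5)[OF P A] by auto
    have "emeasure (M \<Otimes>\<^sub>M M) (A \<times> A) = emeasure M A * emeasure M A"
      using sigma_finite_measure.emeasure_pair_measure_Times[OF sf As As] .
    also have "\<dots> < \<infinity>" using Af by (simp add: ennreal_mult_less_top)
    finally have "integrable (M \<Otimes>\<^sub>M M) (indicator (A \<times> A) :: _ \<Rightarrow> real)"
      using As by (intro integrable_real_indicator) auto
    then show "integrable (M \<Otimes>\<^sub>M M) (\<lambda>z. (1 / measure M A)\<^sup>2 * indicator (A \<times> A) z)" by simp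
  qed
  then show "integrable (M \<Otimes>\<^sub>M M) (\<lambda>z. (cmod (cell_avg_kernel M P (fst z) (snd z)))\<^sup>2)"
    unfolding pw .
qed
definition cell_avg_kernel_real :: "'a measure \<Rightarrow> 'a set set \<Rightarrow> 'a \<Rightarrow> 'a \<Rightarrow> real" where
  "cell_avg_kernel_real M P s t = (\<Sum>A\<in>P. (1 / measure M A) * (indicator A s * indicator A t))"

lemma cell_avg_kernel_of_real: "cell_avg_kernel M P s t = complex_of_real (cell_avg_kernel_real M P s t)"
  unfolding cell_avg_kernel_def cell_avg_kernel_real_def by (simp add: of_real_indicator)

lemma cell_avg_kernel_real_nonneg: "0 \<le> cell_avg_kernel_real M P s t"
  unfolding cell_avg_kernel_real_def by (intro sum_nonneg) auto

lemma integrable_cell_avg_kernel_mult: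
  assumes P: "finite_cells M P" and u: "\<And>A. A \<in> P \<Longrightarrow> integrable M (\<lambda>t. indicator A t * u t)"
  shows "integrable M (\<lambda>t. cell_avg_kernel M P s t * u t)"
proof -
  have "(\<lambda>t. cell_avg_kernel M P s t * u t) = (\<lambda>t. \<Sum>A\<in>P. (indicator A s / complex_of_real (measure M A)) * (indicator A t * u t))"
    by (auto simp: cell_avg_kernel_def sum_distrib_right intro!: sum.cong)
  then show ?thesis using u by simp
qed

lemma cell_avg_kernel_real_integral:
  assumes P: "finite_cells M P" and w: "\<And>A. A \<in> P \<Longrightarrow> integrable M (\<lambda>t. indicator A t * w t)"
  shows "integrable M (\<lambda>t. cell_avg_kernel_real M P s t * w t)"
    and "complex_of_real (LINT t|M. cell_avg_kernel_real M P s t * w t) = cell_avg M P (\<lambda>t. complex_of_real (w t)) s"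
proof -
  have wc: "integrable M (\<lambda>t. indicator A t * complex_of_real (w t))" if "A \<in> P" for A
  proof -
    have "integrable M (\<lambda>t. complex_of_real (indicator A t * w t))"
      using integrable_of_real[OF w[OF that]] .
    then show ?thesis by (simp add: of_real_indicator)
  qed
  have eq: "(\<lambda>t. cell_avg_kernel M P s t * complex_of_real (w t)) = (\<lambda>t. complex_of_real (cell_avg_kernel_real M P s t * w t))"
    by (simp add: cell_avg_kernel_of_real)
  have "integrable M (\<lambda>t. cell_avg_kernel M P s t * complex_of_real (w t))" by (rule integrable_cell_avg_kernel_mult[OF P wc])
  then have "integrable M (\<lambda>t. Re (complex_of_real (cell_avg_kernel_real M P s t * w t)))" unfolding eq by (rule integrable_Re)
  then show ir: "integrable M (\<lambda>t. cell_avg_kernel_real M P s t * w t)" by simp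
  have "complex_of_real (LINT t|M. cell_avg_kernel_real M P s t * w t) = (LINT t|M. cell_avg_kernel M P s t * complex_of_real (w t))"
    unfolding eq by (rule integral_complex_of_real[symmetric])
  also have "\<dots> = cell_avg M P (\<lambda>t. complex_of_real (w t)) s" by (rule cell_avg_kernel_integral[OF P wc])
  finally show "complex_of_real (LINT t|M. cell_avg_kernel_real M P s t * w t) = cell_avg M P (\<lambda>t. complex_of_real (w t)) s" .
qed

lemma integrable_bounded_cell_avg_kernel_mult:
  assumes P: "finite_cells M P" and f: "f \<in> L2 M"
    and \<psi>: "\<psi> \<in> borel_measurable M" "AE t in M. cmod (\<psi> t) \<le> C"
  shows "integrable M (\<lambda>t. \<psi> t * cell_avg_kernel M P s t * f t)"
proof -
  have kf: "integrable M (\<lambda>t. cell_avg_kernel M P s t * f t)"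
    by (rule integrable_cell_avg_kernel_mult[OF P finite_cells_integrable_indicator_mult[OF P _ f]])
  show ?thesis
  proof (rule Bochner_Integration.integrable_bound[where f="\<lambda>t. \<bar>C\<bar> * cmod (cell_avg_kernel M P s t * f t)"])
    show "integrable M (\<lambda>t. \<bar>C\<bar> * cmod (cell_avg_kernel M P s t * f t))"
      using kf by simp
    show "(\<lambda>t. \<psi> t * cell_avg_kernel M P s t * f t) \<in> borel_measurable M"
      using borel_measurable_times[OF \<psi>(1) borel_measurable_integrable[OF kf]] by (simp add: mult.assoc)
    show "AE t in M. norm (\<psi> t * cell_avg_kernel M P s t * f t) \<le> norm (\<bar>C\<bar> * cmod (cell_avg_kernel M P s t * f t))"
      using \<psi>(2) by eventually_elim (auto simp: norm_mult mult.assoc intro!: mult_right_mono)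
  qed
qed

text \<open>The kernel is nonnegative, so a pointwise bound \<open>a + c * b t\<close> on \<open>\<psi>\<close> passes through the
  averaging.\<close>
lemma norm_integral_cell_avg_kernel_le:
  assumes P: "finite_cells M P" and f: "f \<in> L2 M" and \<psi>: "\<psi> \<in> borel_measurable M"
    and b: "b \<in> borel_measurable M" "\<And>t. 0 \<le> b t" "\<And>t. b t \<le> B" and ac: "0 \<le> a" "0 \<le> c"
    and bound: "AE t in M. cmod (\<psi> t) \<le> a + c * b t"
  shows "cmod (LINT t|M. \<psi> t * cell_avg_kernel M P s t * f t) \<le>
    a * cmod (cell_avg M P (\<lambda>t. complex_of_real (cmod (f t))) s) +
    c * cmod (cell_avg M P (\<lambda>t. complex_of_real (b t * cmod (f t))) s)"
proof -
  let ?k = "cell_avg_kernel_real M P s"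
  have bf: "(\<lambda>t. complex_of_real (b t) * f t) \<in> L2 M"
    using b by (intro L2_bounded_mult[where B=B, OF f]) auto
  have w1: "integrable M (\<lambda>t. indicator A t * cmod (f t))" if "A \<in> P" for A
    using L2_integrable_norm_mult[OF finite_cells_indicator_L2[OF P that] f] by simp
  have w2: "integrable M (\<lambda>t. indicator A t * (b t * cmod (f t)))" if "A \<in> P" for A
    using L2_integrable_norm_mult[OF finite_cells_indicator_L2[OF P that] bf] b(2) by (simp add: norm_mult)
  note i1 = cell_avg_kernel_real_integral[OF P w1, of s] and i2 = cell_avg_kernel_real_integral[OF P w2, of s]
  have le: "(LINT t|M. ?k t * w t) \<le> cmod (cell_avg M P (\<lambda>t. complex_of_real (w t)) s)"
    if "\<And>A. A \<in> P \<Longrightarrow> integrable M (\<lambda>t. indicator A t * w t)" for w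
    using cell_avg_kernel_real_integral(2)[OF P that, of s, symmetric] by simp
  have "cmod (LINT t|M. \<psi> t * cell_avg_kernel M P s t * f t) \<le>
      (LINT t|M. cmod (\<psi> t * cell_avg_kernel M P s t * f t))"
    by (rule integral_norm_bound)
  also have "\<dots> \<le> (LINT t|M. a * (?k t * cmod (f t)) + c * (?k t * (b t * cmod (f t))))"
  proof (rule integral_mono_AE)
    have "AE t in M. cmod (\<psi> t) \<le> a + c * B"
      using bound
    proof eventually_elim
      case (elim t)
      then show ?case
        using mult_left_mono[OF b(3) ac(2), of t] by linarith
    qed
    from integrable_norm[OF integrable_bounded_cell_avg_kernel_mult[OF P f \<psi> this]]
    show "integrable M (\<lambda>t. cmod (\<psi> t * cell_avg_kernel M P s t * f t))" .
    show "integrable M (\<lambda>t. a * (?k t * cmod (f t)) + c * (?k t * (b t * cmod (f t))))"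
      using i1(1) i2(1) by simp
    show "AE t in M. cmod (\<psi> t * cell_avg_kernel M P s t * f t) \<le>
        a * (?k t * cmod (f t)) + c * (?k t * (b t * cmod (f t)))"
      using bound
    proof eventually_elim
      case (elim t)
      have "cmod (\<psi> t * cell_avg_kernel M P s t * f t) = cmod (\<psi> t) * (?k t * cmod (f t))"
        by (simp add: norm_mult cell_avg_kernel_of_real cell_avg_kernel_real_nonneg)
      also have "\<dots> \<le> (a + c * b t) * (?k t * cmod (f t))"
        using elim by (intro mult_right_mono) (auto simp: cell_avg_kernel_real_nonneg)
      finally show ?case
        by (simp add: algebra_simps)
    qed
  qed
  also have "\<dots> = a * (LINT t|M. ?k t * cmod (f t)) + c * (LINT t|M. ?k t * (b t * cmod (f t)))"
    using i1(1) i2(1) by simp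
  also have "\<dots> \<le> a * cmod (cell_avg M P (\<lambda>t. complex_of_real (cmod (f t))) s) +
      c * cmod (cell_avg M P (\<lambda>t. complex_of_real (b t * cmod (f t))) s)"
    using le[OF w1] le[OF w2] ac by (intro add_mono mult_left_mono)
  finally show ?thesis .
qed

lemma integrable_norm_integral_diff_le:
  assumes G: "G \<in> borel_measurable M" "integrable M (\<lambda>s. G s * c s)"
    and Fc: "F \<in> borel_measurable M" "c \<in> borel_measurable M"
    and h: "integrable M h" and le: "AE s in M. cmod (F s - G s) * cmod (c s) \<le> h s"
  shows "integrable M (\<lambda>s. F s * c s)"
    and "cmod ((LINT s|M. F s * c s) - (LINT s|M. G s * c s)) \<le> (LINT s|M. h s)"
proof -
  have FG: "integrable M (\<lambda>s. (F s - G s) * c s)"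
  proof (rule Bochner_Integration.integrable_bound[OF h])
    show "(\<lambda>s. (F s - G s) * c s) \<in> borel_measurable M"
      using Fc G(1) by measurable
    show "AE s in M. norm ((F s - G s) * c s) \<le> norm (h s)"
      using le by eventually_elim (simp add: norm_mult)
  qed
  from Bochner_Integration.integrable_add[OF this G(2)]
  show F: "integrable M (\<lambda>s. F s * c s)"
    by (simp add: algebra_simps)
  have "cmod ((LINT s|M. F s * c s) - (LINT s|M. G s * c s)) = cmod (LINT s|M. (F s - G s) * c s)"
    using F G(2) by (simp add: left_diff_distrib)
  also have "\<dots> \<le> (LINT s|M. cmod ((F s - G s) * c s))"
    by (rule integral_norm_bound)
  also have "\<dots> \<le> (LINT s|M. h s)"
    using le integrable_norm[OF FG] h by (intro integral_mono_AE) (auto simp: norm_mult)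
  finally show "cmod ((LINT s|M. F s * c s) - (LINT s|M. G s * c s)) \<le> (LINT s|M. h s)" .
qed

section \<open>Approximating the identity by averaging\<close>

lemma L2_dominated:
  assumes z: "z \<in> L2 M" and f[measurable]: "f \<in> borel_measurable M"
    and le: "\<And>x. x \<in> space M \<Longrightarrow> cmod (f x) \<le> C * cmod (z x)"
  shows "f \<in> L2 M"
proof -
  have "integrable M (\<lambda>x. (cmod (f x))\<^sup>2)"
  proof (rule Bochner_Integration.integrable_bound[where f="\<lambda>x. C\<^sup>2 * (cmod (z x))\<^sup>2"])
    show "integrable M (\<lambda>x. C\<^sup>2 * (cmod (z x))\<^sup>2)"
      using z by (simp add: L2_def)
    show "(\<lambda>x. (cmod (f x))\<^sup>2) \<in> borel_measurable M"
      by measurable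
    show "AE x in M. norm ((cmod (f x))\<^sup>2) \<le> norm (C\<^sup>2 * (cmod (z x))\<^sup>2)"
    proof (rule AE_I2)
      fix x assume "x \<in> space M"
      from power_mono[OF le[OF this] norm_ge_zero, of 2]
      show "norm ((cmod (f x))\<^sup>2) \<le> norm (C\<^sup>2 * (cmod (z x))\<^sup>2)"
        by (simp add: power_mult_distrib)
    qed
  qed
  then show ?thesis
    using f by (simp add: L2_def)
qed

lemma L2_emeasure_finite:
  assumes z: "z \<in> L2 M" and S[measurable]: "S \<in> sets M" and e: "0 < e"
    and le: "\<And>x. x \<in> S \<Longrightarrow> e \<le> cmod (z x)"
  shows "emeasure M S < \<infinity>"
proof -
  have "integrable M (indicator S :: 'a \<Rightarrow> real)"
  proof (rule Bochner_Integration.integrable_bound[where f="\<lambda>x. (cmod (z x))\<^sup>2 / e\<^sup>2"])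
    show "integrable M (\<lambda>x. (cmod (z x))\<^sup>2 / e\<^sup>2)"
      using z by (simp add: L2_def)
    show "(indicator S :: 'a \<Rightarrow> real) \<in> borel_measurable M"
      by measurable
    show "AE x in M. norm (indicator S x :: real) \<le> norm ((cmod (z x))\<^sup>2 / e\<^sup>2)"
    proof (rule AE_I2)
      fix x
      show "norm (indicator S x :: real) \<le> norm ((cmod (z x))\<^sup>2 / e\<^sup>2)"
      proof (cases "x \<in> S")
        case True
        then have "e\<^sup>2 \<le> (cmod (z x))\<^sup>2"
          using le e by (intro power_mono) auto
        then show ?thesis
          using True e by simp
      qed simp
    qed
  qed
  then show ?thesis
    using sets.sets_into_space[OF S] by (simp add: integrable_indicator_iff Int_absorb2)
qed

lemma L2_simple_approx:
  assumes z: "z \<in> L2 M" and e: "e > 0"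
  obtains s where "simple_function M s" "s \<in> L2 M" "l2norm M (\<lambda>x. z x - s x) \<le> e"
    "\<And>c. c \<noteq> 0 \<Longrightarrow> emeasure M (s -` {c} \<inter> space M) < \<infinity>"
proof -
  have zm[measurable]: "z \<in> borel_measurable M" and zi: "integrable M (\<lambda>x. (cmod (z x))\<^sup>2)"
    using z by (auto simp: L2_def)
  obtain F where F': "\<forall>i. simple_function M (F i)" "\<forall>x\<in>space M. (\<lambda>i. F i x) \<longlonglongrightarrow> z x"
    "\<forall>i. \<forall>x\<in>space M. dist (F i x) 0 \<le> 2 * dist (z x) 0"
    using borel_measurable_implies_sequence_metric[OF zm, of 0] by blast
  then have F: "\<And>i. simple_function M (F i)" "\<And>x. x \<in> space M \<Longrightarrow> (\<lambda>i. F i x) \<longlonglongrightarrow> z x"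
    "\<And>i x. x \<in> space M \<Longrightarrow> cmod (F i x) \<le> 2 * cmod (z x)"
    by (auto simp: dist_norm)
  have Fm[measurable]: "F i \<in> borel_measurable M" for i
    using F(1) borel_measurable_simple_function by blast
  have "(\<lambda>i. LINT x|M. (cmod (z x - F i x))\<^sup>2) \<longlonglongrightarrow> (LINT x|M. (0::real))"
  proof (rule integral_dominated_convergence[where w="\<lambda>x. 9 * (cmod (z x))\<^sup>2"])
    show "(\<lambda>x. 0::real) \<in> borel_measurable M" by simp
    show "(\<lambda>x. (cmod (z x - F i x))\<^sup>2) \<in> borel_measurable M" for i by measurable
    show "integrable M (\<lambda>x. 9 * (cmod (z x))\<^sup>2)" using zi by simp
    show "AE x in M. (\<lambda>i. (cmod (z x - F i x))\<^sup>2) \<longlonglongrightarrow> 0"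
    proof (rule AE_I2)
      fix x assume "x \<in> space M"
      from tendsto_diff[OF tendsto_const F(2)[OF this]]
      have "(\<lambda>i. (cmod (z x - F i x))\<^sup>2) \<longlonglongrightarrow> (cmod (z x - z x))\<^sup>2"
        by (intro tendsto_power tendsto_norm)
      then show "(\<lambda>i. (cmod (z x - F i x))\<^sup>2) \<longlonglongrightarrow> 0" by simp
    qed
    show "AE x in M. norm ((cmod (z x - F i x))\<^sup>2) \<le> 9 * (cmod (z x))\<^sup>2" for i
    proof (rule AE_I2)
      fix x assume x: "x \<in> space M"
      have "cmod (z x - F i x) \<le> 3 * cmod (z x)"
        using norm_triangle_ineq4[of "z x" "F i x"] F(3)[OF x, of i] by simp
      then have "(cmod (z x - F i x))\<^sup>2 \<le> (3 * cmod (z x))\<^sup>2"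
        by (intro power_mono) auto
      then show "norm ((cmod (z x - F i x))\<^sup>2) \<le> 9 * (cmod (z x))\<^sup>2"
        by (simp add: power_mult_distrib)
    qed
  qed
  then have "eventually (\<lambda>i. (LINT x|M. (cmod (z x - F i x))\<^sup>2) < e\<^sup>2) sequentially"
    using e by (intro order_tendstoD(2)) auto
  then obtain i where i: "(LINT x|M. (cmod (z x - F i x))\<^sup>2) < e\<^sup>2"
    by (auto simp: eventually_sequentially)
  show ?thesis
  proof
    show "simple_function M (F i)" by (rule F(1))
    show L2: "F i \<in> L2 M"
      by (rule L2_dominated[OF z Fm F(3)])
    show "l2norm M (\<lambda>x. z x - F i x) \<le> e"
      unfolding l2norm_def using i e by (intro real_le_lsqrt) auto
    fix c :: complex assume c: "c \<noteq> 0"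
    have "F i -` {c} \<inter> space M \<in> sets M"
      using F(1) by (simp add: simple_functionD(2))
    moreover have "0 < cmod c / 2"
      using c by simp
    moreover have "cmod c / 2 \<le> cmod (z x)" if "x \<in> F i -` {c} \<inter> space M" for x
      using F(3)[of x i] that by auto
    ultimately show "emeasure M (F i -` {c} \<inter> space M) < \<infinity>"
      by (rule L2_emeasure_finite[OF z])
  qed
qed

lemma cell_avg_const_on_cell:
  assumes P: "finite_cells M P" and C: "C \<in> P" "x \<in> C" and h: "\<And>y. y \<in> C \<Longrightarrow> h y = v"
  shows "cell_avg M P h x = v"
proof -
  have Cs: "C \<in> sets M" and Cpos: "0 < measure M C"
    using finite_cellsD(3,4)[OF P C(1)] by auto
  have "(LINT t|M. indicator C t * h t) = (LINT t|M. v * complex_of_real (indicator C t))"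
    by (intro Bochner_Integration.integral_cong) (auto simp: indicator_def h)
  also have "\<dots> = v * complex_of_real (measure M C)"
    using integral_real_indicator[OF Cs] by simp
  finally show ?thesis
    unfolding cell_avg_def cells_sum_indicator_in[OF P C] using Cpos by simp
qed

lemma cell_avg_outside:
  "(\<And>A. A \<in> P \<Longrightarrow> x \<notin> A) \<Longrightarrow> cell_avg M P h x = 0"
  unfolding cell_avg_def by (rule cells_sum_indicator_notin)

lemma simple_functions_joint_levels:
  assumes Z: "finite Z" and s: "\<And>z. z \<in> Z \<Longrightarrow> simple_function M (s z)"
    and K_def: "\<And>y. K y = {x \<in> space M. \<forall>z\<in>Z. s z x = s z y}"
  shows "finite (K ` space M)" and "K y \<in> sets M"
    and "y \<in> space M \<Longrightarrow> y \<in> K y" and "x \<in> K y \<Longrightarrow> K x = K y"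
proof -
  define \<sigma> where "\<sigma> x = restrict (\<lambda>z. s z x) Z" for x
  have "\<sigma> ` space M \<subseteq> (\<Pi>\<^sub>E z\<in>Z. s z ` space M)"
    unfolding \<sigma>_def by auto
  moreover have "finite (\<Pi>\<^sub>E z\<in>Z. s z ` space M)"
    using Z s by (intro finite_PiE) (auto simp: simple_functionD(1))
  ultimately have "finite (\<sigma> ` space M)"
    by (rule finite_subset)
  moreover have "K y = {x \<in> space M. \<sigma> x = \<sigma> y}" for y
    unfolding K_def \<sigma>_def by (auto simp: restrict_def fun_eq_iff)
  ultimately have "K ` space M = (\<lambda>v. {x \<in> space M. \<sigma> x = v}) ` \<sigma> ` space M"
    by auto
  with \<open>finite (\<sigma> ` space M)\<close> show "finite (K ` space M)"
    by simp
  show "K y \<in> sets M"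
    unfolding K_def
  proof (rule sets.sets_Collect_finite_All[OF _ Z])
    fix z assume "z \<in> Z"
    then have "s z -` {s z y} \<inter> space M \<in> sets M"
      using s by (simp add: simple_functionD(2))
    moreover have "{x \<in> space M. s z x = s z y} = s z -` {s z y} \<inter> space M"
      by auto
    ultimately show "{x \<in> space M. s z x = s z y} \<in> sets M"
      by simp
  qed
  show "y \<in> space M \<Longrightarrow> y \<in> K y" and "x \<in> K y \<Longrightarrow> K x = K y"
    unfolding K_def by auto
qed

text \<open>The cells are the joint level sets of positive measure on which some function is nonzero;
  the null ones are discarded, and off the cells all functions vanish.\<close>
lemma finite_cells_fix_simple:
  assumes Z: "finite Z" and s: "\<And>z. z \<in> Z \<Longrightarrow> simple_function M (s z)"
    and lev: "\<And>z c. z \<in> Z \<Longrightarrow> c \<noteq> 0 \<Longrightarrow> emeasure M (s z -` {c} \<inter> space M) < \<infinity>"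
  obtains P where "finite_cells M P" "\<And>z. z \<in> Z \<Longrightarrow> AE x in M. cell_avg M P (s z) x = s z x"
proof -
  define K where "K y = {x \<in> space M. \<forall>z\<in>Z. s z x = s z y}" for y
  note K = simple_functions_joint_levels[OF Z s K_def, simplified]
  define L where "L = {C \<in> K ` space M. \<exists>z\<in>Z. \<exists>y\<in>C. s z y \<noteq> 0}"
  define P where "P = {C \<in> L. 0 < measure M C}"
  have finL: "finite L"
    unfolding L_def using K(1) by simp
  have Lfin: "emeasure M C < \<infinity>" if CL: "C \<in> L" for C
  proof -
    obtain y z x where C: "C = K y" and z: "z \<in> Z" and x: "x \<in> C" "s z x \<noteq> 0"
      using CL unfolding L_def by auto
    have "C \<subseteq> s z -` {s z x} \<inter> space M"
      using x z K(4)[OF x(1)[unfolded C]] unfolding C K_def by auto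
    then have "emeasure M C \<le> emeasure M (s z -` {s z x} \<inter> space M)"
      using s[OF z] by (intro emeasure_mono) (auto simp: simple_functionD(2))
    also have "\<dots> < \<infinity>"
      using lev[OF z x(2)] .
    finally show ?thesis .
  qed
  have P: "finite_cells M P"
    unfolding finite_cells_def
  proof (intro conjI ballI)
    show "finite P"
      using finL by (simp add: P_def)
    show "disjoint P"
      unfolding disjoint_def pairwise_def disjnt_def
    proof (intro ballI impI)
      fix A B assume "A \<in> P" "B \<in> P" "A \<noteq> B"
      then obtain y y' where "A = K y" "B = K y'"
        by (auto simp: P_def L_def)
      with \<open>A \<noteq> B\<close> K(4) show "A \<inter> B = {}"
        by blast
    qed
    fix A assume A: "A \<in> P"
    show "A \<in> sets M" "0 < measure M A" "emeasure M A < \<infinity>"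
      using A K(2) Lfin by (auto simp: P_def L_def)
  qed
  have "AE x in M. \<forall>C\<in>{C \<in> L. measure M C = 0}. x \<notin> C"
  proof (rule AE_finite_allI)
    show "finite {C \<in> L. measure M C = 0}"
      using finL by simp
    fix C assume C: "C \<in> {C \<in> L. measure M C = 0}"
    then have "C \<in> sets M" "emeasure M C = 0"
      using K(2) Lfin[of C] by (auto simp: L_def emeasure_eq_ennreal_measure less_top)
    then show "AE x in M. x \<notin> C"
      by (intro AE_not_in null_setsI)
  qed
  then have "AE x in M. cell_avg M P (s z) x = s z x" if z: "z \<in> Z" for z
  proof (rule AE_mp, intro AE_I2 impI)
    fix x assume x: "x \<in> space M" and null: "\<forall>C\<in>{C \<in> L. measure M C = 0}. x \<notin> C"
    show "cell_avg M P (s z) x = s z x"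
    proof (cases "K x \<in> P")
      case True
      show ?thesis
      proof (rule cell_avg_const_on_cell[OF P True K(3)[OF x]])
        show "s z y = s z x" if "y \<in> K x" for y
          using that z by (simp add: K_def)
      qed
    next
      case False
      have "K x \<notin> L"
        using False null K(3)[OF x] by (auto simp: P_def less_le)
      then have "s z x = 0"
        using z x K(3)[OF x] unfolding L_def by auto
      moreover have "x \<notin> C" if "C \<in> P" for C
        using that False K(4) unfolding P_def L_def by auto
      ultimately show ?thesis
        by (simp add: cell_avg_outside)
    qed
  qed
  with P show ?thesis
    using that by blast
qed

lemma cell_avg_approx:
  assumes Z: "finite Z" "Z \<subseteq> L2 M" and e: "e > 0"
  obtains P where "finite_cells M P" "\<And>z. z \<in> Z \<Longrightarrow> l2norm M (\<lambda>x. cell_avg M P z x - z x) \<le> e"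
proof -
  have "\<exists>s. simple_function M s \<and> s \<in> L2 M \<and> l2norm M (\<lambda>x. z x - s x) \<le> e / 2 \<and>
    (\<forall>c. c \<noteq> 0 \<longrightarrow> emeasure M (s -` {c} \<inter> space M) < \<infinity>)" if "z \<in> Z" for z
  proof -
    have "z \<in> L2 M" "e / 2 > 0"
      using that Z(2) e by auto
    then show ?thesis
      by (rule L2_simple_approx) blast
  qed
  then obtain s where s: "\<And>z. z \<in> Z \<Longrightarrow> simple_function M (s z) \<and> s z \<in> L2 M \<and>
      l2norm M (\<lambda>x. z x - s z x) \<le> e / 2 \<and> (\<forall>c. c \<noteq> 0 \<longrightarrow> emeasure M (s z -` {c} \<inter> space M) < \<infinity>)"
    by metis
  obtain P where P: "finite_cells M P" and Ps: "\<And>z. z \<in> Z \<Longrightarrow> AE x in M. cell_avg M P (s z) x = s z x"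
    using finite_cells_fix_simple[OF Z(1), where s=s] s by blast
  have "l2norm M (\<lambda>x. cell_avg M P z x - z x) \<le> e" if z: "z \<in> Z" for z
  proof -
    have zL: "z \<in> L2 M" and sL: "s z \<in> L2 M"
      using Z(2) z s[OF z] by auto
    have dL: "(\<lambda>x. z x - s z x) \<in> L2 M"
      using L2_diff[OF zL sL] .
    have "AE x in M. cell_avg M P z x - z x = cell_avg M P (\<lambda>x. z x - s z x) x + (s z x - z x)"
      using Ps[OF z] by eventually_elim (simp add: cell_avg_diff[OF P
          finite_cells_integrable_indicator_mult[OF P _ zL] finite_cells_integrable_indicator_mult[OF P _ sL]])
    then have "l2norm M (\<lambda>x. cell_avg M P z x - z x)
        = l2norm M (\<lambda>x. cell_avg M P (\<lambda>x. z x - s z x) x + (s z x - z x))"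
      using cell_avg_L2[OF P, of z] cell_avg_L2[OF P, of "\<lambda>x. z x - s z x"] zL sL
      by (intro l2norm_cong_AE) (auto simp: L2_def)
    also have "\<dots> \<le> l2norm M (cell_avg M P (\<lambda>x. z x - s z x)) + l2norm M (\<lambda>x. s z x - z x)"
      by (rule l2norm_triangle[OF cell_avg_L2[OF P] L2_diff[OF sL zL]])
    also have "\<dots> \<le> 2 * l2norm M (\<lambda>x. z x - s z x)"
      using l2norm_cell_avg_le[OF P dL] l2norm_minus_commute[of M "s z" z] by simp
    also have "\<dots> \<le> e"
      using s[OF z] by simp
    finally show ?thesis .
  qed
  with P show ?thesis
    using that by blast
qed

section \<open>Inner products in a complex Hilbert space\<close>

lemma cinner_zero_left[simp]: "cinner (0::'h::chilbert) y = 0"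
  using cinner_add_left[of "0::'h" 0 y] by simp

lemma cinner_zero_right[simp]: "cinner (x::'h::chilbert) 0 = 0"
  using cinner_commute[of x 0] by simp

lemma cinner_add_right: "cinner (x::'h::chilbert) (y + z) = cinner x y + cinner x z"
  using cinner_commute[of x "y+z"] cinner_commute[of x y] cinner_commute[of x z] cinner_add_left[of y z x]
  by simp

lemma cinner_scaleC_right: "cinner (x::'h::chilbert) (scaleC c y) = cnj c * cinner x y"
  using cinner_commute[of x "scaleC c y"] cinner_commute[of x y] cinner_scaleC_left[of c y x]
  by simp

lemma scaleC_minus1: "scaleC (-1) (x::'h::chilbert) = - x"
  using scaleR_scaleC[of "-1" x] by simp

lemma cinner_minus_left: "cinner (- x::'h::chilbert) y = - cinner x y"
  using cinner_scaleC_left[of "-1" x y] scaleC_minus1[of x] by simp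

lemma cinner_minus_right: "cinner (x::'h::chilbert) (- y) = - cinner x y"
  using cinner_scaleC_right[of x "-1" y] scaleC_minus1[of y] by simp

lemma cinner_diff_left: "cinner ((x::'h::chilbert) - y) z = cinner x z - cinner y z"
  using cinner_add_left[of x "-y" z] cinner_minus_left[of y z] by simp

lemma cinner_diff_right: "cinner (x::'h::chilbert) (y - z) = cinner x y - cinner x z"
  using cinner_add_right[of x y "-z"] cinner_minus_right[of x z] by simp

lemma cinner_self: "cinner (x::'h::chilbert) x = complex_of_real ((norm x)\<^sup>2)"
proof -
  have im: "Im (cinner x x) = 0"
    using cinner_commute[of x x] by (metis cnj.simps(2) neg_equal_zero)
  have re: "Re (cinner x x) \<ge> 0"
  proof (rule ccontr)
    assume "\<not> Re (cinner x x) \<ge> 0"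
    then have "sqrt (Re (cinner x x)) < 0" by simp
    then show False using norm_cinner[of x] norm_ge_zero[of x] by linarith
  qed
  have "(norm x)\<^sup>2 = Re (cinner x x)" using norm_cinner[of x] re by simp
  then show ?thesis using im by (simp add: complex_eq_iff)
qed

lemma cinner_norm_le: "cmod (cinner (x::'h::chilbert) y) \<le> norm x * norm y"
proof (cases "y = 0")
  case True then show ?thesis by simp
next
  case False
  define b where "b = cinner x y"
  define ny where "ny = norm y"
  define nx where "nx = norm x"
  have nyp: "ny > 0" using False unfolding ny_def by simp
  define t where "t = b / complex_of_real (ny\<^sup>2)"
  define z where "z = x - scaleC t y"
  have yx: "cinner y x = cnj b" unfolding b_def by (rule cinner_commute)
  have xx: "cinner x x = complex_of_real (nx\<^sup>2)" unfolding nx_def by (rule cinner_self)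
  have yy: "cinner y y = complex_of_real (ny\<^sup>2)" unfolding ny_def by (rule cinner_self)
  have "cinner z z = cinner x x - cnj t * b - t * (cnj b - cnj t * cinner y y)"
    unfolding z_def cinner_diff_left cinner_diff_right cinner_scaleC_left cinner_scaleC_right b_def yx
    by (simp add: algebra_simps)
  also have "\<dots> = complex_of_real (nx\<^sup>2 - (cmod b)\<^sup>2 / ny\<^sup>2)"
  proof -
    have bb: "b * cnj b = complex_of_real ((cmod b)\<^sup>2)" by (rule complex_norm_square[symmetric])
    have "cnj t * b = complex_of_real ((cmod b)\<^sup>2 / ny\<^sup>2)"
      unfolding t_def using bb by (simp add: mult.commute)
    moreover have "t * cnj b = complex_of_real ((cmod b)\<^sup>2 / ny\<^sup>2)"
      unfolding t_def using bb by simp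
    moreover have "t * cnj t * cinner y y = complex_of_real ((cmod b)\<^sup>2 / ny\<^sup>2)"
      unfolding t_def yy using bb nyp by (simp add: field_simps power2_eq_square)
    ultimately show ?thesis unfolding xx by (simp add: algebra_simps)
  qed
  finally have "cinner z z = complex_of_real (nx\<^sup>2 - (cmod b)\<^sup>2 / ny\<^sup>2)" .
  moreover have "cinner z z = complex_of_real ((norm z)\<^sup>2)" by (rule cinner_self)
  ultimately have "complex_of_real ((norm z)\<^sup>2) = complex_of_real (nx\<^sup>2 - (cmod b)\<^sup>2 / ny\<^sup>2)" by simp
  then have "(norm z)\<^sup>2 = nx\<^sup>2 - (cmod b)\<^sup>2 / ny\<^sup>2" by (simp only: of_real_eq_iff)
  then have "(cmod b)\<^sup>2 / ny\<^sup>2 \<le> nx\<^sup>2" by (smt (verit) zero_le_power2)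
  then have "(cmod b)\<^sup>2 \<le> nx\<^sup>2 * ny\<^sup>2" using nyp by (simp add: divide_le_eq)
  then have "(cmod b)\<^sup>2 \<le> (nx * ny)\<^sup>2" by (simp add: power_mult_distrib)
  then have "cmod b \<le> nx * ny"
    by (rule power2_le_imp_le) (simp add: nx_def ny_def)
  then show ?thesis unfolding b_def nx_def ny_def .
qed

section \<open>Approximation of the factors\<close>

lemma AE_pair_measure_fst:
  assumes sf: "sigma_finite_measure M" and ae: "AE x in M. P x"
  shows "AE z in M \<Otimes>\<^sub>M M. P (fst z)"
proof -
  obtain N where N: "N \<in> null_sets M" "{x\<in>space M. \<not> P x} \<subseteq> N"
    using ae by (auto elim: AE_E3 simp: eventually_ae_filter)
  have Ns: "N \<in> sets M" and N0: "emeasure M N = 0" using N(1) by auto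
  have "emeasure (M \<Otimes>\<^sub>M M) (N \<times> space M) = emeasure M N * emeasure M (space M)"
    using sigma_finite_measure.emeasure_pair_measure_Times[OF sf Ns sets.top] .
  then have "emeasure (M \<Otimes>\<^sub>M M) (N \<times> space M) = 0" using N0 by simp
  then have nn: "N \<times> space M \<in> null_sets (M \<Otimes>\<^sub>M M)" using Ns by auto
  show ?thesis
  proof (rule AE_I'[OF nn])
    show "{z \<in> space (M \<Otimes>\<^sub>M M). \<not> P (fst z)} \<subseteq> N \<times> space M"
      using N(2) by (auto simp: space_pair_measure)
  qed
qed

lemma AE_pair_measure_snd:
  assumes sf: "sigma_finite_measure M" and ae: "AE x in M. P x"
  shows "AE z in M \<Otimes>\<^sub>M M. P (snd z)"
proof -
  obtain N where N: "N \<in> null_sets M" "{x\<in>space M. \<not> P x} \<subseteq> N"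
    using ae by (auto elim: AE_E3 simp: eventually_ae_filter)
  have Ns: "N \<in> sets M" and N0: "emeasure M N = 0" using N(1) by auto
  have "emeasure (M \<Otimes>\<^sub>M M) (space M \<times> N) = emeasure M (space M) * emeasure M N"
    using sigma_finite_measure.emeasure_pair_measure_Times[OF sf sets.top Ns] .
  then have "emeasure (M \<Otimes>\<^sub>M M) (space M \<times> N) = 0" using N0 by simp
  then have nn: "space M \<times> N \<in> null_sets (M \<Otimes>\<^sub>M M)" using Ns by auto
  show ?thesis
  proof (rule AE_I'[OF nn])
    show "{z \<in> space (M \<Otimes>\<^sub>M M). \<not> P (snd z)} \<subseteq> space M \<times> N"
      using N(2) by (auto simp: space_pair_measure)
  qed
qed


lemma strongly_measurable_bounded_simple_approx:
  fixes f :: "'a \<Rightarrow> 'b::real_normed_vector"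
  assumes "strongly_measurable M f" "AE x in M. norm (f x) < R" "0 < R"
  obtains g where "\<And>n. simple_function M (g n)" "\<And>n x. norm (g n x) \<le> R"
    "AE x in M. (\<lambda>n. g n x) \<longlonglongrightarrow> f x"
proof -
  obtain s where s: "\<And>n. simple_function M (s n)" "AE x in M. (\<lambda>n. s n x) \<longlonglongrightarrow> f x"
    using assms(1) unfolding strongly_measurable_def by blast
  define g where "g n x = (if norm (s n x) \<le> R then s n x else 0)" for n x
  have "simple_function M (g n)" for n
  proof -
    have "g n = (\<lambda>v. if norm v \<le> R then v else 0) \<circ> s n"
      unfolding g_def by (auto simp: fun_eq_iff)
    then show ?thesis
      using s(1) by simp
  qed
  moreover have "norm (g n x) \<le> R" for n x
    unfolding g_def using assms(3) by auto
  moreover have "AE x in M. (\<lambda>n. g n x) \<longlonglongrightarrow> f x"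
    using s(2) assms(2)
  proof eventually_elim
    fix x assume l: "(\<lambda>n. s n x) \<longlonglongrightarrow> f x" and b: "norm (f x) < R"
    from tendsto_norm[OF l] b have "eventually (\<lambda>n. norm (s n x) < R) sequentially"
      by (rule order_tendstoD(2))
    then have "eventually (\<lambda>n. s n x = g n x) sequentially"
      by eventually_elim (simp add: g_def)
    then show "(\<lambda>n. g n x) \<longlonglongrightarrow> f x"
      by (rule Lim_transform_eventually[OF l])
  qed
  ultimately show ?thesis
    using that by blast
qed

text \<open>A measurable version of \<open>\<lambda>s. norm (f s - g m s)\<close>, for a bounded simple approximation \<open>g\<close>
  of a function \<open>f\<close> that is only strongly measurable; the cap \<open>2 * R\<close> keeps it bounded everywhere.\<close>
definition approx_err :: "(nat \<Rightarrow> 'a \<Rightarrow> 'b::real_normed_vector) \<Rightarrow> real \<Rightarrow> nat \<Rightarrow> 'a \<Rightarrow> real" where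
  "approx_err g R m s = min (2 * R) \<bar>lim (\<lambda>k. norm (g k s - g m s))\<bar>"

lemma simple_function_comp2_measurable:
  assumes "simple_function M f" "simple_function M g"
  shows "(\<lambda>x. h (f x) (g x) :: 'c::topological_space) \<in> borel_measurable M"
proof -
  have "(\<lambda>x. h (f x) (g x)) = (\<lambda>p. h (fst p) (snd p)) \<circ> (\<lambda>x. (f x, g x))"
    by auto
  then show ?thesis
    using assms by (simp add: borel_measurable_simple_function)
qed

lemma simple_function_comp_measurable:
  "simple_function M f \<Longrightarrow> (\<lambda>x. h (f x) :: 'c::topological_space) \<in> borel_measurable M"
  using simple_function_comp2_measurable[of M f f "\<lambda>u v. h u"] by simp

lemma approx_err_measurable:
  assumes "\<And>k. simple_function M (g k)"
  shows "approx_err g R m \<in> borel_measurable M"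
proof -
  have [measurable]: "(\<lambda>s. norm (g k s - g m s)) \<in> borel_measurable M" for k
    using simple_function_comp2_measurable[where h="\<lambda>u v. norm (u - v)", OF assms assms] .
  show ?thesis
    unfolding approx_err_def[abs_def] by measurable
qed

lemma approx_err_nonneg: "0 \<le> R \<Longrightarrow> 0 \<le> approx_err g R m s"
  and approx_err_le: "approx_err g R m s \<le> 2 * R"
  unfolding approx_err_def by auto

lemma approx_err_AE:
  fixes g :: "nat \<Rightarrow> 'a \<Rightarrow> 'b::real_normed_vector"
  assumes "AE s in M. (\<lambda>n. g n s) \<longlonglongrightarrow> f s" "AE s in M. norm (f s) \<le> R" "\<And>n s. norm (g n s) \<le> R"
  shows "AE s in M. \<forall>m. approx_err g R m s = norm (f s - g m s)"
  using assms(1,2)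
proof eventually_elim
  fix s assume l: "(\<lambda>n. g n s) \<longlonglongrightarrow> f s" and b: "norm (f s) \<le> R"
  show "\<forall>m. approx_err g R m s = norm (f s - g m s)"
  proof
    fix m
    have "(\<lambda>k. norm (g k s - g m s)) \<longlonglongrightarrow> norm (f s - g m s)"
      by (intro tendsto_norm tendsto_diff l tendsto_const)
    moreover have "norm (f s - g m s) \<le> 2 * R"
      using norm_triangle_ineq4[of "f s" "g m s"] b assms(3)[of m s] by simp
    ultimately show "approx_err g R m s = norm (f s - g m s)"
      unfolding approx_err_def by (simp add: limI)
  qed
qed

lemma approx_err_tendsto:
  fixes g :: "nat \<Rightarrow> 'a \<Rightarrow> 'b::real_normed_vector"
  assumes "AE s in M. (\<lambda>n. g n s) \<longlonglongrightarrow> f s" "AE s in M. norm (f s) \<le> R" "\<And>n s. norm (g n s) \<le> R"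
  shows "AE s in M. (\<lambda>m. approx_err g R m s) \<longlonglongrightarrow> 0"
  using approx_err_AE[OF assms] assms(1)
proof eventually_elim
  fix s assume e: "\<forall>m. approx_err g R m s = norm (f s - g m s)" and l: "(\<lambda>n. g n s) \<longlonglongrightarrow> f s"
  have "(\<lambda>m. norm (f s - g m s)) \<longlonglongrightarrow> norm (f s - f s)"
    by (intro tendsto_norm tendsto_diff l tendsto_const)
  then show "(\<lambda>m. approx_err g R m s) \<longlonglongrightarrow> 0"
    using e by simp
qed

lemma l2norm_weighted_tendsto_0:
  assumes g: "g \<in> L2 M" and e: "\<And>m. e m \<in> borel_measurable M" "\<And>m s. 0 \<le> e m s" "\<And>m s. e m s \<le> C"
    and lim: "AE s in M. (\<lambda>m. e m s) \<longlonglongrightarrow> 0"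
  shows "(\<lambda>m. l2norm M (\<lambda>s. complex_of_real (e m s) * g s)) \<longlonglongrightarrow> 0"
proof -
  have gm[measurable]: "g \<in> borel_measurable M" and gi: "integrable M (\<lambda>s. (cmod (g s))\<^sup>2)"
    using g by (auto simp: L2_def)
  have [measurable]: "e m \<in> borel_measurable M" for m
    by (rule e(1))
  have "(\<lambda>m. LINT s|M. (e m s * cmod (g s))\<^sup>2) \<longlonglongrightarrow> (LINT s|M. (0::real))"
  proof (rule integral_dominated_convergence[where w="\<lambda>s. C\<^sup>2 * (cmod (g s))\<^sup>2"])
    show "(\<lambda>s. 0::real) \<in> borel_measurable M" by simp
    show "(\<lambda>s. (e m s * cmod (g s))\<^sup>2) \<in> borel_measurable M" for m by measurable
    show "integrable M (\<lambda>s. C\<^sup>2 * (cmod (g s))\<^sup>2)" using gi by simp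
    show "AE s in M. (\<lambda>m. (e m s * cmod (g s))\<^sup>2) \<longlonglongrightarrow> 0"
      using lim by eventually_elim (auto intro: tendsto_eq_intros)
    show "AE s in M. norm ((e m s * cmod (g s))\<^sup>2) \<le> C\<^sup>2 * (cmod (g s))\<^sup>2" for m
    proof (rule AE_I2)
      fix s
      have "e m s * cmod (g s) \<le> C * cmod (g s)"
        using e(3) by (intro mult_right_mono) auto
      then have "(e m s * cmod (g s))\<^sup>2 \<le> (C * cmod (g s))\<^sup>2"
        using e(2) by (intro power_mono) auto
      then show "norm ((e m s * cmod (g s))\<^sup>2) \<le> C\<^sup>2 * (cmod (g s))\<^sup>2"
        by (simp add: power_mult_distrib)
    qed
  qed
  then have "(\<lambda>m. sqrt (LINT s|M. (e m s * cmod (g s))\<^sup>2)) \<longlonglongrightarrow> sqrt 0"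
    by (intro tendsto_real_sqrt) simp
  then show ?thesis
    using e(2) by (simp add: l2norm_def norm_mult)
qed

section \<open>Weak* continuity\<close>

lemma bounded_op_id: "bounded_op M (\<lambda>h. h)"
  unfolding bounded_op_def op_bound_def by (auto intro!: exI[of _ 1])

lemma normal_fun_single:
  "normal_fun M (\<lambda>n. if n = 0 then f else (\<lambda>_. 0)) (\<lambda>n. if n = 0 then g else (\<lambda>_. 0)) T = l2inner M (T f) g"
proof -
  have e: "(\<lambda>n. l2inner M (T (if n = 0 then f else (\<lambda>_. 0))) (if n = 0 then g else (\<lambda>_. 0))) =
      (\<lambda>n. if n = 0 then l2inner M (T f) g else 0)"
    by (auto simp: fun_eq_iff l2inner_zero_right)
  have "(\<lambda>n. if n = 0 then l2inner M (T f) g else 0) sums l2inner M (T f) g"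
    using sums_single[of 0 "\<lambda>_. l2inner M (T f) g"] by simp
  then show ?thesis unfolding normal_fun_def e by (rule sums_unique[symmetric])
qed

lemma normal_seq_single:
  "f \<in> L2 M \<Longrightarrow> g \<in> L2 M \<Longrightarrow>
    normal_seq M (\<lambda>n. if n = 0 then f else (\<lambda>_. 0)) (\<lambda>n. if n = 0 then g else (\<lambda>_. 0))"
  unfolding normal_seq_def using L2_zero
  by (auto intro!: summable_finite[of "{0}"] split: if_splits)

lemma norm_suminf_le_split:
  fixes a :: "nat \<Rightarrow> 'b::banach"
  assumes S: "summable S" and tail: "\<And>n. N \<le> n \<Longrightarrow> norm (a n) \<le> S n"
    and head: "\<And>n. n < N \<Longrightarrow> norm (a n) \<le> b n"
  shows "norm (suminf a) \<le> (\<Sum>n. S (n + N)) + (\<Sum>n<N. b n)"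
proof -
  define d where "d n = (if n < N then b n else S n)" for n
  have d: "norm (a n) \<le> d n" for n
    using head[of n] tail[of n] by (cases "n < N") (simp_all add: d_def)
  have "norm (d n) \<le> S n" if "N \<le> n" for n
  proof -
    have "0 \<le> S n"
      using tail[OF that] norm_ge_zero[of "a n"] by linarith
    with that show ?thesis
      by (simp add: d_def)
  qed
  then have sd: "summable d"
    by (rule summable_comparison_test'[OF S])
  have an: "summable (\<lambda>n. norm (a n))"
    by (rule summable_comparison_test'[OF sd, of 0]) (simp add: d)
  have "norm (suminf a) \<le> (\<Sum>n. norm (a n))"
    by (rule summable_norm[OF an])
  also have "\<dots> \<le> suminf d"
    by (rule suminf_le[OF d an sd])
  also have "\<dots> = (\<Sum>n. d (n + N)) + (\<Sum>n<N. d n)"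
    by (rule suminf_split_initial_segment[OF sd])
  also have "\<dots> = (\<Sum>n. S (n + N)) + (\<Sum>n<N. b n)"
    by (simp add: d_def)
  finally show ?thesis .
qed

text \<open>Weak* continuity of \<open>W\<close> at the identity, tested against one pair of vectors: the identity is
  approached by contractions that are close to the identity on a suitable finite set.\<close>
lemma wstar_continuous_approx_id:
  assumes W: "wstar_continuous M W" and f: "f \<in> L2 M" and g: "g \<in> L2 M" and \<delta>: "\<delta> > 0"
  obtains Z \<eta> where "finite Z" "Z \<subseteq> L2 M" "\<eta> > 0"
    "\<And>T. bounded_op M T \<Longrightarrow> (\<And>h. h \<in> L2 M \<Longrightarrow> l2norm M (T h) \<le> l2norm M h) \<Longrightarrow>
      (\<And>z. z \<in> Z \<Longrightarrow> l2norm M (\<lambda>x. z x - T z x) \<le> \<eta>) \<Longrightarrow>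
      cmod (l2inner M (W (\<lambda>h. h) f) g - l2inner M (W T f) g) \<le> \<delta>"
proof -
  obtain x y where xy0: "normal_seq M x y"
    and eq: "\<And>T. bounded_op M T \<Longrightarrow>
      normal_fun M (\<lambda>n. if n = 0 then f else (\<lambda>_. 0)) (\<lambda>n. if n = 0 then g else (\<lambda>_. 0)) (W T) =
      normal_fun M x y T"
    using W normal_seq_single[OF f g] unfolding wstar_continuous_def by blast
  have xy: "\<And>n. x n \<in> L2 M" "\<And>n. y n \<in> L2 M"
    and S: "summable (\<lambda>n. l2norm M (x n) * l2norm M (y n))"
    using xy0 unfolding normal_seq_def by auto
  have Wxy: "l2inner M (W T f) g = (\<Sum>n. l2inner M (T (x n)) (y n))" if "bounded_op M T" for T
    using eq[OF that] unfolding normal_fun_single by (simp add: normal_fun_def)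
  define S where "S n = l2norm M (x n) * l2norm M (y n)" for n
  obtain N where N: "norm (\<Sum>n. S (n + N)) < \<delta> / 4"
    using suminf_exist_split[of "\<delta> / 4" S] S \<delta> unfolding S_def by auto
  define Y where "Y = (\<Sum>n<N. l2norm M (y n))"
  define \<eta> where "\<eta> = \<delta> / (2 * (Y + 1))"
  have Y: "0 \<le> Y"
    unfolding Y_def by (simp add: sum_nonneg l2norm_nonneg)
  have \<eta>: "\<eta> > 0" "\<eta> * Y \<le> \<delta> / 2"
    using Y \<delta> by (auto simp: \<eta>_def field_simps)
  show ?thesis
  proof
    show "finite (x ` {..<N})" "x ` {..<N} \<subseteq> L2 M" "\<eta> > 0"
      using xy \<eta> by auto
    fix T assume T: "bounded_op M T" and contr: "\<And>h. h \<in> L2 M \<Longrightarrow> l2norm M (T h) \<le> l2norm M h"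
      and close: "\<And>z. z \<in> x ` {..<N} \<Longrightarrow> l2norm M (\<lambda>t. z t - T z t) \<le> \<eta>"
    have Tx: "T (x n) \<in> L2 M" for n
      using T xy unfolding bounded_op_def by blast
    define a where "a n = l2inner M (\<lambda>t. x n t - T (x n) t) (y n)" for n
    have a: "norm (a n) \<le> l2norm M (\<lambda>t. x n t - T (x n) t) * l2norm M (y n)" for n
      unfolding a_def by (rule l2inner_norm_le[OF L2_diff[OF xy(1) Tx] xy(2)])
    have tail: "norm (a n) \<le> 2 * S n" for n
    proof -
      have "l2norm M (\<lambda>t. x n t - T (x n) t) \<le> 2 * l2norm M (x n)"
        using l2norm_diff_le[OF xy(1)[of n] Tx[of n]] contr[OF xy(1)[of n]] by simp
      then have "l2norm M (\<lambda>t. x n t - T (x n) t) * l2norm M (y n) \<le> 2 * l2norm M (x n) * l2norm M (y n)"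
        by (intro mult_right_mono) (simp_all add: l2norm_nonneg)
      with a[of n] show ?thesis
        unfolding S_def by (simp add: mult.assoc)
    qed
    have head: "norm (a n) \<le> \<eta> * l2norm M (y n)" if "n < N" for n
    proof -
      have "l2norm M (\<lambda>t. x n t - T (x n) t) \<le> \<eta>"
        using close[of "x n"] that by simp
      then have "l2norm M (\<lambda>t. x n t - T (x n) t) * l2norm M (y n) \<le> \<eta> * l2norm M (y n)"
        by (intro mult_right_mono) (simp_all add: l2norm_nonneg)
      with a[of n] show ?thesis
        by simp
    qed
    have S': "summable S"
      using S unfolding S_def .
    have sum1: "summable (\<lambda>n. l2inner M (x n) (y n))"
      by (rule summable_comparison_test'[OF S', of 0]) (simp add: S_def l2inner_norm_le[OF xy])
    have sum2: "summable (\<lambda>n. l2inner M (T (x n)) (y n))"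
    proof (rule summable_comparison_test'[OF S', of 0])
      fix n
      have "norm (l2inner M (T (x n)) (y n)) \<le> l2norm M (T (x n)) * l2norm M (y n)"
        by (rule l2inner_norm_le[OF Tx xy(2)])
      also have "\<dots> \<le> S n"
        unfolding S_def using contr[OF xy(1)] by (intro mult_right_mono) (simp_all add: l2norm_nonneg)
      finally show "norm (l2inner M (T (x n)) (y n)) \<le> S n" .
    qed
    have "l2inner M (W (\<lambda>h. h) f) g - l2inner M (W T f) g
        = (\<Sum>n. l2inner M (x n) (y n)) - (\<Sum>n. l2inner M (T (x n)) (y n))"
      unfolding Wxy[OF bounded_op_id] Wxy[OF T] ..
    also have "\<dots> = (\<Sum>n. l2inner M (x n) (y n) - l2inner M (T (x n)) (y n))"
      by (rule suminf_diff[OF sum1 sum2])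
    also have "\<dots> = (\<Sum>n. a n)"
      unfolding a_def by (simp add: l2inner_diff_left[OF xy(1) Tx xy(2)])
    also have "norm \<dots> \<le> (\<Sum>n. 2 * S (n + N)) + (\<Sum>n<N. \<eta> * l2norm M (y n))"
      by (intro norm_suminf_le_split summable_mult S' tail head)
    also have "\<dots> = 2 * (\<Sum>n. S (n + N)) + \<eta> * Y"
      using suminf_mult[OF summable_ignore_initial_segment[OF S', of N], of 2]
      unfolding Y_def sum_distrib_left by simp
    also have "\<dots> \<le> \<delta>"
      using N \<eta>(2) abs_ge_self[of "\<Sum>n. S (n + N)"] by simp
    finally show "cmod (l2inner M (W (\<lambda>h. h) f) g - l2inner M (W T f) g) \<le> \<delta>" .
  qed
qed

section \<open>The factorized Schur multiplier\<close>

text \<open>\<open>aM\<close> and \<open>bM\<close> are bounded simple approximations of \<open>\<alpha>\<close> and \<open>\<beta>\<close>. With them,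
  \<open>\<langle>W I f, g\<rangle>\<close> is approximated by \<open>diag_form m f g = \<integral> \<langle>aM m t, bM m t\<rangle> f t \<overline>g t\<close>.\<close>

locale schur_approx =
  fixes M :: "'a measure" and \<phi> :: "'a \<Rightarrow> 'a \<Rightarrow> complex"
    and \<alpha> \<beta> :: "'a \<Rightarrow> 'h::chilbert" and W :: "'a op \<Rightarrow> 'a op"
    and aM bM :: "nat \<Rightarrow> 'a \<Rightarrow> 'h" and R :: real
  assumes sf: "sigma_finite_measure M"
    and phim: "(\<lambda>z. \<phi> (fst z) (snd z)) \<in> borel_measurable (M \<Otimes>\<^sub>M M)"
    and rep: "AE z in M \<Otimes>\<^sub>M M. \<phi> (fst z) (snd z) = cinner (\<alpha> (fst z)) (\<beta> (snd z))"
    and W: "schur_ext M \<phi> W"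
    and Rp: "R > 0"
    and aS: "\<And>n. simple_function M (aM n)" and bS: "\<And>n. simple_function M (bM n)"
    and aB: "\<And>n x. norm (aM n x) \<le> R" and bB: "\<And>n x. norm (bM n x) \<le> R"
    and aL: "AE x in M. (\<lambda>n. aM n x) \<longlonglongrightarrow> \<alpha> x" and bL: "AE x in M. (\<lambda>n. bM n x) \<longlonglongrightarrow> \<beta> x"
    and \<alpha>B: "AE x in M. norm (\<alpha> x) \<le> R" and \<beta>B: "AE x in M. norm (\<beta> x) \<le> R"
begin

lemma W_bounded: "bounded_op M T \<Longrightarrow> bounded_op M (W T)"
  using W unfolding schur_ext_def by blast

lemma W_hs_op: "L2_kernel M k \<Longrightarrow> op_eq M (W (hs_op M k)) (hs_op M (\<lambda>s t. \<phi> s t * k s t))"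
  using W unfolding schur_ext_def by blast

lemma W_wstar: "wstar_continuous M W"
  using W unfolding schur_ext_def by blast

lemma pair_sf: "pair_sigma_finite M M"
  using sf by (simp add: pair_sigma_finite_def)

lemma phi_bound: "AE z in M \<Otimes>\<^sub>M M. cmod (\<phi> (fst z) (snd z)) \<le> R * R"
  using rep AE_pair_measure_fst[OF sf \<alpha>B] AE_pair_measure_snd[OF sf \<beta>B]
proof eventually_elim
  case (elim z)
  have "cmod (cinner (\<alpha> (fst z)) (\<beta> (snd z))) \<le> norm (\<alpha> (fst z)) * norm (\<beta> (snd z))"
    by (rule cinner_norm_le)
  also have "\<dots> \<le> R * R"
    using elim(2,3) Rp by (intro mult_mono) auto
  finally show ?case
    using elim(1) by simp
qed

lemma phi_measurable_snd: "s \<in> space M \<Longrightarrow> (\<lambda>t. \<phi> s t) \<in> borel_measurable M"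
  using measurable_Pair2[OF phim, of s] by simp

abbreviation "alpha_err \<equiv> approx_err aM R"
abbreviation "beta_err \<equiv> approx_err bM R"

lemma alpha_err_measurable [measurable]: "alpha_err m \<in> borel_measurable M"
  and beta_err_measurable [measurable]: "beta_err m \<in> borel_measurable M"
  by (intro approx_err_measurable aS bS)+

lemma alpha_err_nonneg: "0 \<le> alpha_err m s" and beta_err_nonneg: "0 \<le> beta_err m s"
  using Rp by (auto intro: approx_err_nonneg)

lemma alpha_err_AE: "AE s in M. \<forall>m. alpha_err m s = norm (\<alpha> s - aM m s)"
  and beta_err_AE: "AE s in M. \<forall>m. beta_err m s = norm (\<beta> s - bM m s)"
  by (intro approx_err_AE aL \<alpha>B aB bL \<beta>B bB)+

lemma phi_approx_err:
  "AE z in M \<Otimes>\<^sub>M M. cmod (\<phi> (fst z) (snd z) - cinner (aM m (fst z)) (bM m (snd z)))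
    \<le> R * alpha_err m (fst z) + R * beta_err m (snd z)"
  using rep AE_pair_measure_fst[OF sf alpha_err_AE] AE_pair_measure_snd[OF sf beta_err_AE]
    AE_pair_measure_snd[OF sf \<beta>B]
proof eventually_elim
  case (elim z)
  define a b a' b' where "a = \<alpha> (fst z)" and "b = \<beta> (snd z)" and "a' = aM m (fst z)" and "b' = bM m (snd z)"
  have "cmod (cinner a b - cinner a' b') = cmod (cinner (a - a') b + cinner a' (b - b'))"
    by (simp add: cinner_diff_left cinner_diff_right)
  also have "\<dots> \<le> norm (a - a') * norm b + norm a' * norm (b - b')"
    by (intro order_trans[OF norm_triangle_ineq] add_mono cinner_norm_le)
  also have "\<dots> \<le> norm (a - a') * R + R * norm (b - b')"
    using elim(4) aB[of m "fst z"] unfolding a'_def b_def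
    by (intro add_mono mult_left_mono mult_right_mono) auto
  finally show ?case
    using elim(1-3) unfolding a_def b_def a'_def b'_def by (simp add: mult.commute)
qed

definition alpha_level :: "nat \<Rightarrow> 'h \<Rightarrow> 'a set" where "alpha_level m a = aM m -` {a} \<inter> space M"
definition beta_level :: "nat \<Rightarrow> 'h \<Rightarrow> 'a set" where "beta_level m b = bM m -` {b} \<inter> space M"
definition value_pairs :: "nat \<Rightarrow> ('h \<times> 'h) set" where "value_pairs m = aM m ` space M \<times> bM m ` space M"
definition pair_inner :: "'h \<times> 'h \<Rightarrow> complex" where "pair_inner p = cinner (fst p) (snd p)"
definition beta_cut :: "nat \<Rightarrow> ('a \<Rightarrow> complex) \<Rightarrow> 'h \<Rightarrow> 'a \<Rightarrow> complex" where
  "beta_cut m f b t = indicator (beta_level m b) t * f t"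
definition alpha_cut :: "nat \<Rightarrow> ('a \<Rightarrow> complex) \<Rightarrow> 'h \<Rightarrow> 'a \<Rightarrow> complex" where
  "alpha_cut m g a s = indicator (alpha_level m a) s * g s"
definition diag_approx :: "nat \<Rightarrow> 'a \<Rightarrow> complex" where "diag_approx m t = cinner (aM m t) (bM m t)"
definition diag_form :: "nat \<Rightarrow> ('a \<Rightarrow> complex) \<Rightarrow> ('a \<Rightarrow> complex) \<Rightarrow> complex" where
  "diag_form m f g = (LINT t|M. diag_approx m t * f t * cnj (g t))"
definition approx_schur_avg :: "nat \<Rightarrow> 'a set set \<Rightarrow> ('a \<Rightarrow> complex) \<Rightarrow> 'a \<Rightarrow> complex" where
  "approx_schur_avg m P f s = (\<Sum>p\<in>value_pairs m. pair_inner p * (indicator (alpha_level m (fst p)) s * cell_avg M P (beta_cut m f (snd p)) s))"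
definition schur_avg :: "'a set set \<Rightarrow> ('a \<Rightarrow> complex) \<Rightarrow> 'a \<Rightarrow> complex" where
  "schur_avg P f s = (LINT t|M. \<phi> s t * cell_avg_kernel M P s t * f t)"

lemma finite_value_pairs: "finite (value_pairs m)"
  unfolding value_pairs_def using simple_functionD(1)[OF aS] simple_functionD(1)[OF bS] by simp

lemma alpha_level_sets[measurable]: "alpha_level m a \<in> sets M"
  unfolding alpha_level_def by (rule simple_functionD(2)[OF aS])
lemma beta_level_sets[measurable]: "beta_level m b \<in> sets M"
  unfolding beta_level_def by (rule simple_functionD(2)[OF bS])

lemma beta_cut_L2: "f \<in> L2 M \<Longrightarrow> beta_cut m f b \<in> L2 M"
  unfolding beta_cut_def by (rule L2_bounded_mult[where B=1]) (auto simp: indicator_def)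
lemma alpha_cut_L2: "g \<in> L2 M \<Longrightarrow> alpha_cut m g a \<in> L2 M"
  unfolding alpha_cut_def by (rule L2_bounded_mult[where B=1]) (auto simp: indicator_def)

lemma cinner_approx_expand:
  assumes "s \<in> space M" "t \<in> space M"
  shows "cinner (aM m s) (bM m t) = (\<Sum>p\<in>value_pairs m. pair_inner p * (indicator (alpha_level m (fst p)) s * indicator (beta_level m (snd p)) t))"
proof -
  have "(\<Sum>p\<in>value_pairs m. pair_inner p * (indicator (alpha_level m (fst p)) s * indicator (beta_level m (snd p)) t)) =
        (\<Sum>p\<in>value_pairs m. if (aM m s, bM m t) = p then pair_inner p else 0)"
    using assms by (intro sum.cong refl) (auto simp: alpha_level_def beta_level_def indicator_def)
  also have "\<dots> = pair_inner (aM m s, bM m t)"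
    using finite_value_pairs[of m] assms by (simp add: value_pairs_def)
  finally show ?thesis by (simp add: pair_inner_def)
qed

lemma diag_approx_bound: "cmod (diag_approx m t) \<le> R * R"
  unfolding diag_approx_def using cinner_norm_le[of "aM m t" "bM m t"] aB[of m t] bB[of m t]
  by (meson mult_mono norm_ge_zero order_trans)

lemma diag_approx_measurable[measurable]: "diag_approx m \<in> borel_measurable M"
  unfolding diag_approx_def using simple_function_comp2_measurable[where h=cinner, OF aS bS] .

lemma diag_form_expand:
  assumes f: "f \<in> L2 M" and g: "g \<in> L2 M"
  shows "diag_form m f g = (\<Sum>p\<in>value_pairs m. pair_inner p * l2inner M (beta_cut m f (snd p)) (alpha_cut m g (fst p)))"
proof -
  have "diag_form m f g = (LINT t|M. (\<Sum>p\<in>value_pairs m. pair_inner p * (beta_cut m f (snd p) t * cnj (alpha_cut m g (fst p) t))))"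
    unfolding diag_form_def
  proof (intro Bochner_Integration.integral_cong refl)
    fix t assume t: "t \<in> space M"
    have "diag_approx m t * f t * cnj (g t) = (\<Sum>p\<in>value_pairs m. pair_inner p * (indicator (alpha_level m (fst p)) t * indicator (beta_level m (snd p)) t)) * (f t * cnj (g t))"
      unfolding diag_approx_def cinner_approx_expand[OF t t] by simp
    also have "\<dots> = (\<Sum>p\<in>value_pairs m. pair_inner p * (beta_cut m f (snd p) t * cnj (alpha_cut m g (fst p) t)))"
      unfolding sum_distrib_right beta_cut_def alpha_cut_def
      by (intro sum.cong refl) (simp add: indicator_def)
    finally show "diag_approx m t * f t * cnj (g t) = (\<Sum>p\<in>value_pairs m. pair_inner p * (beta_cut m f (snd p) t * cnj (alpha_cut m g (fst p) t)))" .
  qed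
  also have "\<dots> = (\<Sum>p\<in>value_pairs m. LINT t|M. pair_inner p * (beta_cut m f (snd p) t * cnj (alpha_cut m g (fst p) t)))"
    using L2_integrable_mult_cnj[OF beta_cut_L2[OF f] alpha_cut_L2[OF g]]
    by (intro Bochner_Integration.integral_sum) auto
  also have "\<dots> = (\<Sum>p\<in>value_pairs m. pair_inner p * l2inner M (beta_cut m f (snd p)) (alpha_cut m g (fst p)))"
    unfolding l2inner_def by simp
  finally show ?thesis .
qed

lemma approx_schur_avg_L2: "finite_cells M P \<Longrightarrow> approx_schur_avg m P f \<in> L2 M"
  unfolding approx_schur_avg_def
  by (intro L2_sum[OF finite_value_pairs] L2_cmult L2_bounded_mult[where B=1] cell_avg_L2) (auto simp: indicator_def)

lemma approx_schur_avg_expand: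
  assumes P: "finite_cells M P" and g: "g \<in> L2 M"
  shows "l2inner M (approx_schur_avg m P f) g = (\<Sum>p\<in>value_pairs m. pair_inner p * l2inner M (cell_avg M P (beta_cut m f (snd p))) (alpha_cut m g (fst p)))"
proof -
  have "l2inner M (approx_schur_avg m P f) g = (LINT s|M. (\<Sum>p\<in>value_pairs m. pair_inner p * (cell_avg M P (beta_cut m f (snd p)) s * cnj (alpha_cut m g (fst p) s))))"
    unfolding l2inner_def approx_schur_avg_def sum_distrib_right
    by (intro Bochner_Integration.integral_cong refl sum.cong) (simp add: alpha_cut_def indicator_def)
  also have "\<dots> = (\<Sum>p\<in>value_pairs m. LINT s|M. pair_inner p * (cell_avg M P (beta_cut m f (snd p)) s * cnj (alpha_cut m g (fst p) s)))"
    using L2_integrable_mult_cnj[OF cell_avg_L2[OF P] alpha_cut_L2[OF g]]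
    by (intro Bochner_Integration.integral_sum) auto
  also have "\<dots> = (\<Sum>p\<in>value_pairs m. pair_inner p * l2inner M (cell_avg M P (beta_cut m f (snd p))) (alpha_cut m g (fst p)))"
    unfolding l2inner_def by simp
  finally show ?thesis .
qed

lemma approx_schur_avg_diag_form_err:
  assumes P: "finite_cells M P" and f: "f \<in> L2 M" and g: "g \<in> L2 M"
  shows "cmod (l2inner M (approx_schur_avg m P f) g - diag_form m f g) \<le>
    (\<Sum>p\<in>value_pairs m. cmod (pair_inner p) * (l2norm M (\<lambda>x. cell_avg M P (beta_cut m f (snd p)) x - beta_cut m f (snd p) x) * l2norm M (alpha_cut m g (fst p))))"
proof -
  have "l2inner M (approx_schur_avg m P f) g - diag_form m f g =
     (\<Sum>p\<in>value_pairs m. pair_inner p * l2inner M (\<lambda>x. cell_avg M P (beta_cut m f (snd p)) x - beta_cut m f (snd p) x) (alpha_cut m g (fst p)))"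
    unfolding approx_schur_avg_expand[OF P g] diag_form_expand[OF f g] sum_subtractf[symmetric]
    using l2inner_diff_left[OF cell_avg_L2[OF P] beta_cut_L2[OF f] alpha_cut_L2[OF g]]
    by (intro sum.cong refl) (simp add: right_diff_distrib)
  also have "cmod \<dots> \<le> (\<Sum>p\<in>value_pairs m. cmod (pair_inner p * l2inner M (\<lambda>x. cell_avg M P (beta_cut m f (snd p)) x - beta_cut m f (snd p) x) (alpha_cut m g (fst p))))"
    by (rule norm_sum)
  also have "\<dots> \<le> (\<Sum>p\<in>value_pairs m. cmod (pair_inner p) * (l2norm M (\<lambda>x. cell_avg M P (beta_cut m f (snd p)) x - beta_cut m f (snd p) x) * l2norm M (alpha_cut m g (fst p))))"
    unfolding norm_mult
    by (intro sum_mono mult_left_mono l2inner_norm_le L2_diff cell_avg_L2[OF P] beta_cut_L2[OF f] alpha_cut_L2[OF g]) auto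
  finally show ?thesis .
qed


lemma beta_err_mult_L2: "f \<in> L2 M \<Longrightarrow> (\<lambda>t. complex_of_real (beta_err m t) * f t) \<in> L2 M"
  by (rule L2_bounded_mult[where B="2*R"]) (auto simp: beta_err_nonneg approx_err_le)
lemma alpha_err_mult_L2: "g \<in> L2 M \<Longrightarrow> (\<lambda>t. complex_of_real (alpha_err m t) * g t) \<in> L2 M"
  by (rule L2_bounded_mult[where B="2*R"]) (auto simp: alpha_err_nonneg approx_err_le)

lemma approx_schur_avg_eq_integral:
  assumes P: "finite_cells M P" and f: "f \<in> L2 M" and s: "s \<in> space M"
  shows "approx_schur_avg m P f s = (LINT t|M. cinner (aM m s) (bM m t) * cell_avg_kernel M P s t * f t)"
proof -
  have "(LINT t|M. cinner (aM m s) (bM m t) * cell_avg_kernel M P s t * f t) =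
      (LINT t|M. (\<Sum>p\<in>value_pairs m. (pair_inner p * indicator (alpha_level m (fst p)) s) *
        (cell_avg_kernel M P s t * beta_cut m f (snd p) t)))"
  proof (intro Bochner_Integration.integral_cong refl)
    fix t assume t: "t \<in> space M"
    show "cinner (aM m s) (bM m t) * cell_avg_kernel M P s t * f t =
        (\<Sum>p\<in>value_pairs m. (pair_inner p * indicator (alpha_level m (fst p)) s) *
          (cell_avg_kernel M P s t * beta_cut m f (snd p) t))"
      unfolding cinner_approx_expand[OF s t] sum_distrib_right beta_cut_def
      by (intro sum.cong refl) (simp add: mult_ac)
  qed
  also have "\<dots> = (\<Sum>p\<in>value_pairs m. (pair_inner p * indicator (alpha_level m (fst p)) s) *
      (LINT t|M. cell_avg_kernel M P s t * beta_cut m f (snd p) t))"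
    using integrable_cell_avg_kernel_mult[OF P finite_cells_integrable_indicator_mult[OF P _ beta_cut_L2[OF f]]]
    by (subst Bochner_Integration.integral_sum) auto
  also have "\<dots> = approx_schur_avg m P f s"
    unfolding approx_schur_avg_def
    using cell_avg_kernel_integral[OF P finite_cells_integrable_indicator_mult[OF P _ beta_cut_L2[OF f]]]
    by (intro sum.cong refl) (simp add: mult_ac)
  finally show ?thesis ..
qed

lemma schur_avg_approx_pointwise:
  assumes P: "finite_cells M P" and f: "f \<in> L2 M"
  shows "AE s in M. cmod (schur_avg P f s - approx_schur_avg m P f s) \<le>
    R * alpha_err m s * cmod (cell_avg M P (\<lambda>t. complex_of_real (cmod (f t))) s) +
    R * cmod (cell_avg M P (\<lambda>t. complex_of_real (beta_err m t * cmod (f t))) s)"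
proof -
  have "AE s in M. AE t in M. cmod (\<phi> s t - cinner (aM m s) (bM m t)) \<le> R * alpha_err m s + R * beta_err m t"
    using pair_sigma_finite.AE_pair[OF pair_sf phi_approx_err[of m]] by simp
  moreover have "AE s in M. AE t in M. cmod (\<phi> s t) \<le> R * R"
    using pair_sigma_finite.AE_pair[OF pair_sf phi_bound] by simp
  ultimately show ?thesis
    using AE_space
  proof eventually_elim
    case (elim s)
    have \<phi>m: "(\<lambda>t. \<phi> s t) \<in> borel_measurable M"
      using phi_measurable_snd[OF elim(3)] .
    have am: "(\<lambda>t. cinner (aM m s) (bM m t)) \<in> borel_measurable M"
      using simple_function_comp_measurable[where h="\<lambda>v. cinner (aM m s) v", OF bS] .
    have "cmod (cinner (aM m s) (bM m t)) \<le> R * R" for t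
      using cinner_norm_le[of "aM m s" "bM m t"] aB[of m s] bB[of m t]
      by (meson mult_mono norm_ge_zero order_trans)
    then have "AE t in M. cmod (cinner (aM m s) (bM m t)) \<le> R * R"
      by simp
    note i = integrable_bounded_cell_avg_kernel_mult[OF P f \<phi>m elim(2), of s]
      integrable_bounded_cell_avg_kernel_mult[OF P f am this, of s]
    have "schur_avg P f s - approx_schur_avg m P f s =
        (LINT t|M. \<phi> s t * cell_avg_kernel M P s t * f t -
          cinner (aM m s) (bM m t) * cell_avg_kernel M P s t * f t)"
      unfolding schur_avg_def approx_schur_avg_eq_integral[OF P f elim(3)] using i by simp
    also have "\<dots> = (LINT t|M. (\<phi> s t - cinner (aM m s) (bM m t)) * cell_avg_kernel M P s t * f t)"
      by (simp add: left_diff_distrib)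
    also have "cmod \<dots> \<le> R * alpha_err m s * cmod (cell_avg M P (\<lambda>t. complex_of_real (cmod (f t))) s) +
        R * cmod (cell_avg M P (\<lambda>t. complex_of_real (beta_err m t * cmod (f t))) s)"
      using elim(1) Rp alpha_err_nonneg beta_err_nonneg approx_err_le \<phi>m am
      by (intro norm_integral_cell_avg_kernel_le[OF P f, where B="2 * R"]) auto
    finally show ?case .
  qed
qed

definition alpha_err_mult :: "nat \<Rightarrow> ('a \<Rightarrow> complex) \<Rightarrow> 'a \<Rightarrow> complex" where
  "alpha_err_mult m g s = complex_of_real (alpha_err m s) * g s"
definition beta_err_mult :: "nat \<Rightarrow> ('a \<Rightarrow> complex) \<Rightarrow> 'a \<Rightarrow> complex" where
  "beta_err_mult m f s = complex_of_real (beta_err m s) * f s"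

lemma schur_avg_measurable:
  assumes P: "finite_cells M P" and f: "f \<in> L2 M"
  shows "schur_avg P f \<in> borel_measurable M"
proof -
  have fm[measurable]: "f \<in> borel_measurable M" using f by (simp add: L2_def)
  have k: "(\<lambda>z. cell_avg_kernel M P (fst z) (snd z)) \<in> borel_measurable (M \<Otimes>\<^sub>M M)"
    using L2_kernel_cell_avg_kernel[OF sf P] unfolding L2_kernel_def by auto
  have fs: "(\<lambda>z. f (snd z)) \<in> borel_measurable (M \<Otimes>\<^sub>M M)" by measurable
  have "(\<lambda>z. \<phi> (fst z) (snd z) * cell_avg_kernel M P (fst z) (snd z) * f (snd z)) \<in> borel_measurable (M \<Otimes>\<^sub>M M)"
    using borel_measurable_times[OF borel_measurable_times[OF phim k] fs] .
  then have "case_prod (\<lambda>s t. \<phi> s t * cell_avg_kernel M P s t * f t) \<in> borel_measurable (M \<Otimes>\<^sub>M M)"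
    by (simp add: case_prod_beta')
  then show ?thesis
    unfolding schur_avg_def[abs_def] by (rule sigma_finite_measure.borel_measurable_lebesgue_integral[OF sf])
qed


lemma schur_avg_approx:
  assumes P: "finite_cells M P" and f: "f \<in> L2 M" and g: "g \<in> L2 M"
  shows "cmod (l2inner M (schur_avg P f) g - l2inner M (approx_schur_avg m P f) g) \<le>
       R * (l2norm M f * l2norm M (alpha_err_mult m g)) + R * (l2norm M (beta_err_mult m f) * l2norm M g)"
proof -
  define E1 where "E1 = cell_avg M P (\<lambda>t. complex_of_real (cmod (f t)))"
  define E2 where "E2 = cell_avg M P (\<lambda>t. complex_of_real (beta_err m t * cmod (f t)))"
  define h where "h s = R * (cmod (E1 s) * cmod (alpha_err_mult m g s)) + R * (cmod (E2 s) * cmod (g s))" for s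
  have E: "E1 \<in> L2 M" "E2 \<in> L2 M"
    unfolding E1_def E2_def by (intro cell_avg_L2[OF P])+
  have ag: "alpha_err_mult m g \<in> L2 M" and bf: "beta_err_mult m f \<in> L2 M"
    unfolding alpha_err_mult_def beta_err_mult_def by (intro alpha_err_mult_L2 g beta_err_mult_L2 f)+
  have G: "approx_schur_avg m P f \<in> L2 M"
    by (rule approx_schur_avg_L2[OF P])
  have hi: "integrable M h"
    unfolding h_def using L2_integrable_norm_mult[OF E(1) ag] L2_integrable_norm_mult[OF E(2) g] by simp
  have "AE s in M. cmod (schur_avg P f s - approx_schur_avg m P f s) * cmod (cnj (g s)) \<le> h s"
    using schur_avg_approx_pointwise[OF P f, of m]
  proof eventually_elim
    case (elim s)
    have "cmod (schur_avg P f s - approx_schur_avg m P f s) * cmod (g s)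
        \<le> (R * alpha_err m s * cmod (E1 s) + R * cmod (E2 s)) * cmod (g s)"
      using elim unfolding E1_def E2_def by (intro mult_right_mono) auto
    then show ?case
      unfolding h_def alpha_err_mult_def by (simp add: algebra_simps norm_mult alpha_err_nonneg)
  qed
  moreover have "approx_schur_avg m P f \<in> borel_measurable M"
    using G by (simp add: L2_def)
  moreover have "(\<lambda>s. cnj (g s)) \<in> borel_measurable M"
    using g by (simp add: L2_def borel_measurable_cnj)
  ultimately have "cmod (l2inner M (schur_avg P f) g - l2inner M (approx_schur_avg m P f) g) \<le> (LINT s|M. h s)"
    unfolding l2inner_def
    by (intro integrable_norm_integral_diff_le(2) L2_integrable_mult_cnj[OF G g] schur_avg_measurable[OF P f] hi)
  also have "\<dots> = R * (LINT s|M. cmod (E1 s) * cmod (alpha_err_mult m g s)) + R * (LINT s|M. cmod (E2 s) * cmod (g s))"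
    unfolding h_def using L2_integrable_norm_mult[OF E(1) ag] L2_integrable_norm_mult[OF E(2) g] by simp
  also have "\<dots> \<le> R * (l2norm M E1 * l2norm M (alpha_err_mult m g)) + R * (l2norm M E2 * l2norm M g)"
    using L2_integral_norm_mult_le[OF E(1) ag] L2_integral_norm_mult_le[OF E(2) g] Rp
    by (intro add_mono mult_left_mono) auto
  also have "\<dots> \<le> R * (l2norm M f * l2norm M (alpha_err_mult m g)) + R * (l2norm M (beta_err_mult m f) * l2norm M g)"
  proof -
    have "l2norm M E1 \<le> l2norm M f"
      using l2norm_cell_avg_le[OF P L2_of_real_norm[OF f]] unfolding E1_def l2norm_of_real_norm .
    moreover have "l2norm M E2 \<le> l2norm M (\<lambda>t. complex_of_real (cmod (beta_err_mult m f t)))"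
      using l2norm_cell_avg_le[OF P L2_of_real_norm[OF bf]] unfolding E2_def
      by (simp add: beta_err_mult_def norm_mult beta_err_nonneg)
    ultimately show ?thesis
      using Rp unfolding l2norm_of_real_norm
      by (intro add_mono mult_left_mono mult_right_mono) (auto simp: l2norm_nonneg)
  qed
  finally show ?thesis .
qed

text \<open>The three steps: weak* continuity moves \<open>W I\<close> to \<open>W (cell_avg M P)\<close>, which is the Schur
  multiplier applied to a Hilbert-Schmidt operator; replacing \<open>\<phi>\<close> by \<open>\<langle>aM m s, bM m t\<rangle>\<close> costs
  the bound below; and for fine cells the result is close to \<open>diag_form m f g\<close>.\<close>
lemma W_id_diag_form_err:
  assumes f: "f \<in> L2 M" and g: "g \<in> L2 M"
  shows "cmod (l2inner M (W (\<lambda>h. h) f) g - diag_form m f g) \<le>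
    R * (l2norm M f * l2norm M (alpha_err_mult m g)) + R * (l2norm M (beta_err_mult m f) * l2norm M g)"
    (is "_ \<le> ?B")
proof (rule field_le_epsilon)
  fix \<delta> :: real assume \<delta>: "\<delta> > 0"
  obtain Z\<^sub>1 \<eta>\<^sub>1 where Z\<^sub>1: "finite Z\<^sub>1" "Z\<^sub>1 \<subseteq> L2 M" "\<eta>\<^sub>1 > 0"
    and wstar: "\<And>T. bounded_op M T \<Longrightarrow> (\<And>h. h \<in> L2 M \<Longrightarrow> l2norm M (T h) \<le> l2norm M h) \<Longrightarrow>
      (\<And>z. z \<in> Z\<^sub>1 \<Longrightarrow> l2norm M (\<lambda>x. z x - T z x) \<le> \<eta>\<^sub>1) \<Longrightarrow>
      cmod (l2inner M (W (\<lambda>h. h) f) g - l2inner M (W T f) g) \<le> \<delta> / 2"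
    using wstar_continuous_approx_id[OF W_wstar f g half_gt_zero[OF \<delta>]] by blast
  define K where "K = (\<Sum>p\<in>value_pairs m. cmod (pair_inner p) * l2norm M (alpha_cut m g (fst p)))"
  have K: "0 \<le> K"
    unfolding K_def by (intro sum_nonneg) (simp add: l2norm_nonneg)
  define \<eta> where "\<eta> = min \<eta>\<^sub>1 (\<delta> / (2 * (K + 1)))"
  have \<eta>: "\<eta> > 0" "\<eta> \<le> \<eta>\<^sub>1"
    using \<delta> K Z\<^sub>1(3) by (auto simp: \<eta>_def)
  have "\<eta> * K \<le> \<delta> / (2 * (K + 1)) * K"
    unfolding \<eta>_def using K by (intro mult_right_mono) auto
  also have "\<dots> \<le> \<delta> / 2"
    using K \<delta> by (simp add: field_simps)
  finally have \<eta>K: "\<eta> * K \<le> \<delta> / 2" .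
  define Z\<^sub>2 where "Z\<^sub>2 = (\<lambda>p. beta_cut m f (snd p)) ` value_pairs m"
  have "finite (Z\<^sub>1 \<union> Z\<^sub>2)" "Z\<^sub>1 \<union> Z\<^sub>2 \<subseteq> L2 M"
    using Z\<^sub>1 beta_cut_L2[OF f] finite_value_pairs unfolding Z\<^sub>2_def by auto
  then obtain P where P: "finite_cells M P"
    and close: "\<And>z. z \<in> Z\<^sub>1 \<union> Z\<^sub>2 \<Longrightarrow> l2norm M (\<lambda>x. cell_avg M P z x - z x) \<le> \<eta>"
    by (rule cell_avg_approx[OF _ _ \<eta>(1)]) blast
  define T where "T = hs_op M (cell_avg_kernel M P)"
  have T: "bounded_op M T"
    unfolding T_def by (rule bounded_op_cell_avg[OF P])
  have T_eq: "h \<in> L2 M \<Longrightarrow> T h = cell_avg M P h" for h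
    unfolding T_def using hs_op_cell_avg_kernel[OF P] by auto
  have e1: "cmod (l2inner M (W (\<lambda>h. h) f) g - l2inner M (W T f) g) \<le> \<delta> / 2"
  proof (rule wstar[OF T])
    show "l2norm M (T h) \<le> l2norm M h" if "h \<in> L2 M" for h
      using T_eq[OF that] l2norm_cell_avg_le[OF P that] by simp
    fix z assume z: "z \<in> Z\<^sub>1"
    then have "z \<in> L2 M"
      using Z\<^sub>1(2) by auto
    then have "l2norm M (\<lambda>x. z x - T z x) = l2norm M (\<lambda>x. z x - cell_avg M P z x)"
      by (simp add: T_eq)
    also have "\<dots> = l2norm M (\<lambda>x. cell_avg M P z x - z x)"
      by (rule l2norm_minus_commute)
    also have "\<dots> \<le> \<eta>\<^sub>1"
      using close[of z] z \<eta>(2) by simp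
    finally show "l2norm M (\<lambda>x. z x - T z x) \<le> \<eta>\<^sub>1" .
  qed
  have WT: "l2inner M (W T f) g = l2inner M (schur_avg P f) g"
  proof -
    have "AE s in M. W T f s = hs_op M (\<lambda>s t. \<phi> s t * cell_avg_kernel M P s t) f s"
      using W_hs_op[OF L2_kernel_cell_avg_kernel[OF sf P]] f unfolding op_eq_def T_def by blast
    moreover have "W T f \<in> L2 M"
      using W_bounded[OF T] f unfolding bounded_op_def by blast
    ultimately show ?thesis
      using schur_avg_measurable[OF P f] g
      by (intro l2inner_cong_AE) (auto simp: L2_def hs_op_def schur_avg_def mult.assoc)
  qed
  have e3: "cmod (l2inner M (approx_schur_avg m P f) g - diag_form m f g) \<le> \<eta> * K"
  proof -
    have "(\<Sum>p\<in>value_pairs m. cmod (pair_inner p) * (l2norm M (\<lambda>x. cell_avg M P (beta_cut m f (snd p)) x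
          - beta_cut m f (snd p) x) * l2norm M (alpha_cut m g (fst p))))
        \<le> (\<Sum>p\<in>value_pairs m. cmod (pair_inner p) * (\<eta> * l2norm M (alpha_cut m g (fst p))))"
    proof (rule sum_mono)
      fix p assume "p \<in> value_pairs m"
      then have "l2norm M (\<lambda>x. cell_avg M P (beta_cut m f (snd p)) x - beta_cut m f (snd p) x) \<le> \<eta>"
        using close unfolding Z\<^sub>2_def by blast
      then show "cmod (pair_inner p) * (l2norm M (\<lambda>x. cell_avg M P (beta_cut m f (snd p)) x
          - beta_cut m f (snd p) x) * l2norm M (alpha_cut m g (fst p)))
        \<le> cmod (pair_inner p) * (\<eta> * l2norm M (alpha_cut m g (fst p)))"
        by (intro mult_left_mono mult_right_mono) (simp_all add: l2norm_nonneg)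
    qed
    with approx_schur_avg_diag_form_err[OF P f g, of m]
    have "cmod (l2inner M (approx_schur_avg m P f) g - diag_form m f g) \<le>
        (\<Sum>p\<in>value_pairs m. cmod (pair_inner p) * (\<eta> * l2norm M (alpha_cut m g (fst p))))"
      by linarith
    then show ?thesis
      unfolding K_def by (simp add: sum_distrib_left mult_ac)
  qed
  let ?A = "l2inner M (W (\<lambda>h. h) f) g - l2inner M (W T f) g"
    and ?S = "l2inner M (schur_avg P f) g - l2inner M (approx_schur_avg m P f) g"
    and ?D = "l2inner M (approx_schur_avg m P f) g - diag_form m f g"
  have "l2inner M (W (\<lambda>h. h) f) g - diag_form m f g = ?A + ?S + ?D"
    using WT by simp
  then have "cmod (l2inner M (W (\<lambda>h. h) f) g - diag_form m f g) \<le> cmod ?A + cmod ?S + cmod ?D"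
    by (simp only:) (rule order_trans[OF norm_triangle_ineq add_right_mono[OF norm_triangle_ineq]])
  then show "cmod (l2inner M (W (\<lambda>h. h) f) g - diag_form m f g) \<le> ?B + \<delta>"
    using e1 e3 \<eta>K schur_avg_approx[OF P f g, of m] by linarith
qed

lemma diag_form_tendsto_W_id:
  assumes f: "f \<in> L2 M" and g: "g \<in> L2 M"
  shows "(\<lambda>m. diag_form m f g) \<longlonglongrightarrow> l2inner M (W (\<lambda>h. h) f) g"
proof -
  have "(\<lambda>m. l2norm M (alpha_err_mult m g)) \<longlonglongrightarrow> 0"
    unfolding alpha_err_mult_def
    by (rule l2norm_weighted_tendsto_0[OF g alpha_err_measurable alpha_err_nonneg approx_err_le
          approx_err_tendsto[OF aL \<alpha>B aB]])
  moreover have "(\<lambda>m. l2norm M (beta_err_mult m f)) \<longlonglongrightarrow> 0"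
    unfolding beta_err_mult_def
    by (rule l2norm_weighted_tendsto_0[OF f beta_err_measurable beta_err_nonneg approx_err_le
          approx_err_tendsto[OF bL \<beta>B bB]])
  ultimately have "(\<lambda>m. R * (l2norm M f * l2norm M (alpha_err_mult m g)) + R * (l2norm M (beta_err_mult m f) * l2norm M g))
      \<longlonglongrightarrow> R * (l2norm M f * 0) + R * (0 * l2norm M g)"
    by (intro tendsto_intros)
  then have B: "(\<lambda>m. R * (l2norm M f * l2norm M (alpha_err_mult m g)) + R * (l2norm M (beta_err_mult m f) * l2norm M g))
      \<longlonglongrightarrow> 0"
    by simp
  have "\<forall>m. norm (l2inner M (W (\<lambda>h. h) f) g - diag_form m f g) \<le>
      R * (l2norm M f * l2norm M (alpha_err_mult m g)) + R * (l2norm M (beta_err_mult m f) * l2norm M g)"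
    using W_id_diag_form_err[OF f g] by blast
  from Lim_null_comparison[OF always_eventually[OF this] B]
  have "(\<lambda>m. l2inner M (W (\<lambda>h. h) f) g - diag_form m f g) \<longlonglongrightarrow> 0" .
  then have "(\<lambda>m. l2inner M (W (\<lambda>h. h) f) g - (l2inner M (W (\<lambda>h. h) f) g - diag_form m f g))
      \<longlonglongrightarrow> l2inner M (W (\<lambda>h. h) f) g - 0"
    by (intro tendsto_intros)
  then show ?thesis
    by simp
qed

lemma diag_approx_tendsto: "AE t in M. (\<lambda>m. diag_approx m t) \<longlonglongrightarrow> cinner (\<alpha> t) (\<beta> t)"
  using aL bL
proof eventually_elim
  fix t assume la: "(\<lambda>n. aM n t) \<longlonglongrightarrow> \<alpha> t" and lb: "(\<lambda>n. bM n t) \<longlonglongrightarrow> \<beta> t"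
  have na: "(\<lambda>m. norm (aM m t - \<alpha> t)) \<longlonglongrightarrow> 0"
    using tendsto_norm[OF tendsto_diff[OF la tendsto_const[of "\<alpha> t"]]] by simp
  have nb: "(\<lambda>m. norm (bM m t - \<beta> t)) \<longlonglongrightarrow> 0"
    using tendsto_norm[OF tendsto_diff[OF lb tendsto_const[of "\<beta> t"]]] by simp
  have g0: "(\<lambda>m. R * norm (aM m t - \<alpha> t) + norm (\<alpha> t) * norm (bM m t - \<beta> t)) \<longlonglongrightarrow> R * 0 + norm (\<alpha> t) * 0"
    by (intro tendsto_intros na nb)
  have "(\<lambda>m. diag_approx m t - cinner (\<alpha> t) (\<beta> t)) \<longlonglongrightarrow> 0"
  proof (rule Lim_null_comparison)
    show "(\<lambda>m. R * norm (aM m t - \<alpha> t) + norm (\<alpha> t) * norm (bM m t - \<beta> t)) \<longlonglongrightarrow> 0" using g0 by simp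
    show "\<forall>\<^sub>F m in sequentially. norm (diag_approx m t - cinner (\<alpha> t) (\<beta> t)) \<le> R * norm (aM m t - \<alpha> t) + norm (\<alpha> t) * norm (bM m t - \<beta> t)"
    proof (rule always_eventually, rule allI)
      fix m
      have "diag_approx m t - cinner (\<alpha> t) (\<beta> t) = cinner (aM m t - \<alpha> t) (bM m t) + cinner (\<alpha> t) (bM m t - \<beta> t)"
        unfolding diag_approx_def by (simp add: cinner_diff_left cinner_diff_right)
      then have "norm (diag_approx m t - cinner (\<alpha> t) (\<beta> t)) \<le> cmod (cinner (aM m t - \<alpha> t) (bM m t)) + cmod (cinner (\<alpha> t) (bM m t - \<beta> t))"
        by (simp add: norm_triangle_ineq)
      also have "\<dots> \<le> norm (aM m t - \<alpha> t) * norm (bM m t) + norm (\<alpha> t) * norm (bM m t - \<beta> t)"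
        by (intro add_mono cinner_norm_le)
      also have "\<dots> \<le> R * norm (aM m t - \<alpha> t) + norm (\<alpha> t) * norm (bM m t - \<beta> t)"
        using mult_right_mono[OF bB[of m t] norm_ge_zero[of "aM m t - \<alpha> t"]] by (simp add: mult.commute)
      finally show "norm (diag_approx m t - cinner (\<alpha> t) (\<beta> t)) \<le> R * norm (aM m t - \<alpha> t) + norm (\<alpha> t) * norm (bM m t - \<beta> t)" .
    qed
  qed
  then have "(\<lambda>m. (diag_approx m t - cinner (\<alpha> t) (\<beta> t)) + cinner (\<alpha> t) (\<beta> t)) \<longlonglongrightarrow> 0 + cinner (\<alpha> t) (\<beta> t)"
    by (intro tendsto_intros)
  then show "(\<lambda>m. diag_approx m t) \<longlonglongrightarrow> cinner (\<alpha> t) (\<beta> t)" by simp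
qed

lemma diag_form_tendsto:
  assumes f: "f \<in> L2 M" and g: "g \<in> L2 M" and c: "c \<in> borel_measurable M"
    and ae: "AE t in M. (\<lambda>m. diag_approx m t) \<longlonglongrightarrow> c t"
  shows "(\<lambda>m. diag_form m f g) \<longlonglongrightarrow> (LINT t|M. c t * f t * cnj (g t))"
  unfolding diag_form_def
proof (rule integral_dominated_convergence[where w="\<lambda>t. (R * R) * cmod (f t * cnj (g t))"])
  have fm: "f \<in> borel_measurable M" and gm: "g \<in> borel_measurable M" using f g by (auto simp: L2_def)
  show "(\<lambda>t. c t * f t * cnj (g t)) \<in> borel_measurable M" using c fm gm by measurable
  show "\<And>m. (\<lambda>t. diag_approx m t * f t * cnj (g t)) \<in> borel_measurable M" using fm gm by measurable
  show "integrable M (\<lambda>t. (R * R) * cmod (f t * cnj (g t)))" using L2_integrable_mult_cnj[OF f g] by simp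
  show "AE t in M. (\<lambda>m. diag_approx m t * f t * cnj (g t)) \<longlonglongrightarrow> c t * f t * cnj (g t)"
    using ae by eventually_elim (intro tendsto_intros)
  show "\<And>m. AE t in M. norm (diag_approx m t * f t * cnj (g t)) \<le> (R * R) * cmod (f t * cnj (g t))"
  proof (rule AE_I2)
    fix m t
    show "norm (diag_approx m t * f t * cnj (g t)) \<le> (R * R) * cmod (f t * cnj (g t))"
      using mult_right_mono[OF diag_approx_bound[of m t], of "cmod (f t) * cmod (g t)"] by (simp add: norm_mult mult.assoc)
  qed
qed

lemma W_id_eq_id_if_diag_one:
  assumes "AE t in M. cinner (\<alpha> t) (\<beta> t) = 1"
  shows "op_eq M (W (\<lambda>h. h)) (\<lambda>h. h)"
  unfolding op_eq_def
proof
  fix f assume f: "f \<in> L2 M"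
  have one: "AE t in M. (\<lambda>m. diag_approx m t) \<longlonglongrightarrow> 1"
    using diag_approx_tendsto assms by eventually_elim simp
  have "(\<lambda>m. diag_form m f g) \<longlonglongrightarrow> l2inner M f g" if g: "g \<in> L2 M" for g
    using diag_form_tendsto[OF f g _ one] by (simp add: l2inner_def)
  then have "l2inner M (W (\<lambda>h. h) f) g = l2inner M f g" if "g \<in> L2 M" for g
    using LIMSEQ_unique[OF diag_form_tendsto_W_id[OF f that]] that by blast
  then show "AE x in M. W (\<lambda>h. h) f x = f x"
    using W_bounded[OF bounded_op_id] f unfolding bounded_op_def
    by (intro L2_AE_eq_if_l2inner_eq) auto
qed

lemma diag_one_if_W_id_eq_id:
  assumes eq: "op_eq M (W (\<lambda>h. h)) (\<lambda>h. h)"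
  shows "AE t in M. cinner (\<alpha> t) (\<beta> t) = 1"
proof -
  define d where "d t = (if cmod (lim (\<lambda>m. diag_approx m t)) \<le> R * R then lim (\<lambda>m. diag_approx m t) else 0)" for t
  have d_meas: "d \<in> borel_measurable M"
    unfolding d_def by measurable
  have d_bound: "cmod (d t) \<le> R * R" for t
    unfolding d_def using Rp by auto
  have d_AE: "AE t in M. d t = cinner (\<alpha> t) (\<beta> t) \<and> (\<lambda>m. diag_approx m t) \<longlonglongrightarrow> d t"
    using diag_approx_tendsto \<alpha>B \<beta>B
  proof eventually_elim
    case (elim t)
    have "cmod (cinner (\<alpha> t) (\<beta> t)) \<le> norm (\<alpha> t) * norm (\<beta> t)"
      by (rule cinner_norm_le)
    also have "\<dots> \<le> R * R"
      using elim(2,3) Rp by (intro mult_mono) auto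
    finally have "cmod (cinner (\<alpha> t) (\<beta> t)) \<le> R * R" .
    then have "d t = cinner (\<alpha> t) (\<beta> t)"
      unfolding d_def using limI[OF elim(1)] by simp
    with elim(1) show ?case
      by simp
  qed
  have "(LINT t|M. d t * f t * cnj (g t)) = l2inner M f g" if f: "f \<in> L2 M" and g: "g \<in> L2 M" for f g
  proof (rule LIMSEQ_unique)
    have "AE t in M. (\<lambda>m. diag_approx m t) \<longlonglongrightarrow> d t"
      using d_AE by eventually_elim blast
    then show "(\<lambda>m. diag_form m f g) \<longlonglongrightarrow> (LINT t|M. d t * f t * cnj (g t))"
      by (rule diag_form_tendsto[OF f g d_meas])
    have "W (\<lambda>h. h) f \<in> L2 M" "AE x in M. W (\<lambda>h. h) f x = f x"
      using W_bounded[OF bounded_op_id] eq f unfolding bounded_op_def op_eq_def by blast+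
    then have "l2inner M (W (\<lambda>h. h) f) g = l2inner M f g"
      using f g by (intro l2inner_cong_AE) (auto simp: L2_def)
    then show "(\<lambda>m. diag_form m f g) \<longlonglongrightarrow> l2inner M f g"
      using diag_form_tendsto_W_id[OF f g] by simp
  qed
  then have "AE t in M. d t = 1"
    by (rule AE_eq_1_if_mult_l2inner_eq[OF sf d_meas d_bound])
  then show ?thesis
    using d_AE by eventually_elim simp
qed

end

theorem mainTheorem7:
  fixes M :: "'a measure" and \<phi> :: "'a \<Rightarrow> 'a \<Rightarrow> complex"
    and \<alpha> \<beta> :: "'a \<Rightarrow> 'h::chilbert" and W :: "'a op \<Rightarrow> 'a op"
  assumes "sigma_finite_measure M"
    and "Linf2 M \<phi>"
    and "schur_multiplier M \<phi>"
    and "Linf_vec M \<alpha>" and "Linf_vec M \<beta>"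
    and "AE z in M \<Otimes>\<^sub>M M. \<phi> (fst z) (snd z) = cinner (\<alpha> (fst z)) (\<beta> (snd z))"
    and "schur_ext M \<phi> W"
  shows "op_eq M (W (\<lambda>h. h)) (\<lambda>h. h) \<longleftrightarrow> (AE t in M. cinner (\<alpha> t) (\<beta> t) = 1)"
proof -
  obtain C\<^sub>\<alpha> C\<^sub>\<beta> where C: "AE x in M. norm (\<alpha> x) \<le> C\<^sub>\<alpha>" "AE x in M. norm (\<beta> x) \<le> C\<^sub>\<beta>"
    using assms(4,5) unfolding Linf_vec_def by blast
  define R where "R = max \<bar>C\<^sub>\<alpha>\<bar> \<bar>C\<^sub>\<beta>\<bar> + 1"
  have R: "0 < R"
    by (simp add: R_def)
  have R\<^sub>\<alpha>: "AE x in M. norm (\<alpha> x) < R"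
    using C(1) by eventually_elim (simp add: R_def less_max_iff_disj)
  have R\<^sub>\<beta>: "AE x in M. norm (\<beta> x) < R"
    using C(2) by eventually_elim (simp add: R_def less_max_iff_disj)
  obtain aM where a: "\<And>n. simple_function M (aM n)" "\<And>n x. norm (aM n x) \<le> R"
    "AE x in M. (\<lambda>n. aM n x) \<longlonglongrightarrow> \<alpha> x"
    using strongly_measurable_bounded_simple_approx[OF _ R\<^sub>\<alpha> R] assms(4) unfolding Linf_vec_def by blast
  obtain bM where b: "\<And>n. simple_function M (bM n)" "\<And>n x. norm (bM n x) \<le> R"
    "AE x in M. (\<lambda>n. bM n x) \<longlonglongrightarrow> \<beta> x"
    using strongly_measurable_bounded_simple_approx[OF _ R\<^sub>\<beta> R] assms(5) unfolding Linf_vec_def by blast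
  have "AE x in M. norm (\<alpha> x) \<le> R" "AE x in M. norm (\<beta> x) \<le> R"
    using R\<^sub>\<alpha> R\<^sub>\<beta> by (auto elim: eventually_mono)
  with assms(1,2,6,7) R a b have "schur_approx M \<phi> \<alpha> \<beta> W aM bM R"
    unfolding schur_approx_def Linf2_def by blast
  then interpret schur_approx M \<phi> \<alpha> \<beta> W aM bM R .
  show ?thesis
    using W_id_eq_id_if_diag_one diag_one_if_W_id_eq_id by blast
qed

end
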